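(* Let $W$ be a Brownian motion and $X$ the strong solution of $dX_t=b(X_t)dt+\sigma(X_t)dW_t$, $X_0=\xi\in\mathbb{R}$, where $\inf\sigma(K)>0$ for every compact $K\subset\mathbb{R}$, $\sigma$ is Lipschitz, and $b$ is bounded Borel measurable. Let $AP$ be a finite set of atomic formulas interpreted by Borel sets such that every propositional formula $p$ satisfies $X(\omega),t\models p\Leftrightarrow X_t(\omega)\in B_p$ for some $B_p$ that is a union of a finite pairwise separated family of positive intervals on $\mathbb{R}$ (possibly $\emptyset$ or $\mathbb{R}$). Let $p$ be a propositional formula. Then for every $t\in(0,\infty)$, $\chi^{(n)}_p(\omega,t)\to\chi_p(\omega,t)$ almost surely; in particular $\mathbb{P}(\omega : X(\omega),\Lambda_n(t)\models_n p)\to\mathbb{P}(\omega : X(\omega),t\models p)$.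
   Context: Propositional formulas: atomic formulas closed under $\lnot$ and $\wedge$. Positive interval on $\mathbb{R}$: $\langle x,y\rangle$ with $x<y$, endpoints open or closed; pairwise separated means $\overline{B_i}\cap\overline{B_j}=\emptyset$ for $i\neq j$. For $t\in\mathbb{N}/n:=\{k/n:k\in\mathbb{N}\}$, $X(\omega),t\models_n p$ iff $X_t(\omega)\in B_p$. $\Lambda_n(t):=\lfloor nt\rfloor/n$; $\chi_p(\omega,t)=1$ iff $X(\omega),t\models p$ (else $0$); $\chi^{(n)}_p(\omega,t)=1$ iff $X(\omega),\Lambda_n(t)\models_n p$ (else $0$). *)

theory Defs
  imports "HOL-Probability.Probability"
begin

definition brownian_motion :: "'w measure \<Rightarrow> (real \<Rightarrow> 'w \<Rightarrow> real) \<Rightarrow> bool" where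
  "brownian_motion M W \<longleftrightarrow>
     prob_space M \<and>
     (\<forall>t\<ge>0. W t \<in> borel_measurable M) \<and>
     (\<forall>\<omega>\<in>space M. W 0 \<omega> = 0) \<and>
     (\<forall>\<omega>\<in>space M. continuous_on {0..} (\<lambda>t. W t \<omega>)) \<and>
     (\<forall>s t. 0 \<le> s \<longrightarrow> s < t \<longrightarrow>
        distributed M lborel (\<lambda>\<omega>. W t \<omega> - W s \<omega>)
          (\<lambda>x. ennreal (normal_density 0 (sqrt (t - s)) x))) \<and>
     (\<forall>(ts :: nat \<Rightarrow> real) k. strict_mono ts \<longrightarrow> 0 \<le> ts 0 \<longrightarrow>
        prob_space.indep_vars M (\<lambda>_. borel) (\<lambda>i \<omega>. W (ts (Suc i)) \<omega> - W (ts i) \<omega>) {..<k})"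

definition bm_filtration :: "'w measure \<Rightarrow> (real \<Rightarrow> 'w \<Rightarrow> real) \<Rightarrow> real \<Rightarrow> 'w measure" where
  "bm_filtration M W s = sigma (space M)
     ({W r -` B \<inter> space M | r B. 0 \<le> r \<and> r \<le> s \<and> B \<in> sets borel} \<union> null_sets M)"

text \<open>Ito integral of a continuous adapted integrand H against W on [0,t], realised as the
  limit in probability of left-point Riemann sums along the dyadic partitions
  (k/2^m) of [0,t].\<close>

definition ito_riemann_sum ::
  "(real \<Rightarrow> 'w \<Rightarrow> real) \<Rightarrow> (real \<Rightarrow> 'w \<Rightarrow> real) \<Rightarrow> real \<Rightarrow> nat \<Rightarrow> 'w \<Rightarrow> real" where
  "ito_riemann_sum W H t m \<omega> =
     (\<Sum>k < nat \<lceil>2 ^ m * t\<rceil>.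
        H (real k / 2 ^ m) \<omega> * (W (min (real (Suc k) / 2 ^ m) t) \<omega> - W (real k / 2 ^ m) \<omega>))"

definition converges_in_prob :: "'w measure \<Rightarrow> (nat \<Rightarrow> 'w \<Rightarrow> real) \<Rightarrow> ('w \<Rightarrow> real) \<Rightarrow> bool" where
  "converges_in_prob M Y Z \<longleftrightarrow>
     (\<forall>\<epsilon>>0. (\<lambda>m. measure M {\<omega> \<in> space M. \<bar>Y m \<omega> - Z \<omega>\<bar> > \<epsilon>}) \<longlonglongrightarrow> 0)"

text \<open>X is a strong solution of dX = b(X) dt + sigma(X) dW, X_0 = xi (deterministic):
  continuous, adapted to the augmented filtration of W, and for every t >= 0
  X_t = xi + int_0^t b(X_s) ds + int_0^t sigma(X_s) dW_s  almost surely
  (the equality being expressed by the Riemann-sum characterisation of the Ito integral).\<close>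

definition strong_solution ::
  "'w measure \<Rightarrow> (real \<Rightarrow> 'w \<Rightarrow> real) \<Rightarrow> (real \<Rightarrow> real) \<Rightarrow> (real \<Rightarrow> real) \<Rightarrow> real
    \<Rightarrow> (real \<Rightarrow> 'w \<Rightarrow> real) \<Rightarrow> bool" where
  "strong_solution M W b \<sigma> \<xi> X \<longleftrightarrow>
     (\<forall>\<omega>\<in>space M. X 0 \<omega> = \<xi>) \<and>
     (\<forall>\<omega>\<in>space M. continuous_on {0..} (\<lambda>t. X t \<omega>)) \<and>
     (\<forall>t\<ge>0. X t \<in> borel_measurable (bm_filtration M W t)) \<and>
     (\<forall>t\<ge>0. converges_in_prob M
        (ito_riemann_sum W (\<lambda>s \<omega>. \<sigma> (X s \<omega>)) t)
        (\<lambda>\<omega>. X t \<omega> - \<xi> - (LBINT s=0..t. b (X s \<omega>))))"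

datatype 'a pform = Atom 'a | Neg "'a pform" | Conj "'a pform" "'a pform"

primrec psem :: "('a \<Rightarrow> real set) \<Rightarrow> 'a pform \<Rightarrow> real set" where
  "psem I (Atom a) = I a"
| "psem I (Neg p) = - psem I p"
| "psem I (Conj p q) = psem I p \<inter> psem I q"

definition models :: "('a \<Rightarrow> real set) \<Rightarrow> (real \<Rightarrow> 'w \<Rightarrow> real) \<Rightarrow> 'w \<Rightarrow> real \<Rightarrow> 'a pform \<Rightarrow> bool" where
  "models I X \<omega> t p \<longleftrightarrow> X t \<omega> \<in> psem I p"

text \<open>A positive interval <x,y> with x < y (endpoints in the extended reals, so that
  half-lines and the whole line are included), each finite endpoint open or closed.\<close>

definition pos_interval :: "real set \<Rightarrow> bool" where
  "pos_interval S \<longleftrightarrow> (\<exists>(x::ereal) (y::ereal) lc rc. x < y \<and>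
     S = {r. (x < ereal r \<or> (lc \<and> x = ereal r)) \<and> (ereal r < y \<or> (rc \<and> ereal r = y))})"

definition sep_interval_union :: "real set \<Rightarrow> bool" where
  "sep_interval_union B \<longleftrightarrow> (\<exists>F. finite F \<and> (\<forall>S\<in>F. pos_interval S) \<and>
     (\<forall>S\<in>F. \<forall>T\<in>F. S \<noteq> T \<longrightarrow> closure S \<inter> closure T = {}) \<and> B = \<Union>F)"

definition Lambda :: "nat \<Rightarrow> real \<Rightarrow> real" where
  "Lambda n t = real_of_int \<lfloor>real n * t\<rfloor> / real n"

definition chi :: "('a \<Rightarrow> real set) \<Rightarrow> (real \<Rightarrow> 'w \<Rightarrow> real) \<Rightarrow> 'a pform \<Rightarrow> 'w \<Rightarrow> real \<Rightarrow> real" where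
  "chi I X p \<omega> t = (if models I X \<omega> t p then 1 else 0)"

text \<open>chi^(n)_p(omega,t) = 1 iff X(omega), Lambda_n(t) |=_n p, i.e. X_{Lambda_n t} in B_p.\<close>

definition chi_n :: "('a \<Rightarrow> real set) \<Rightarrow> (real \<Rightarrow> 'w \<Rightarrow> real) \<Rightarrow> nat \<Rightarrow> 'a pform \<Rightarrow> 'w \<Rightarrow> real \<Rightarrow> real" where
  "chi_n I X n p \<omega> t = (if models I X \<omega> (Lambda n t) p then 1 else 0)"

end

theory Submission
  imports Defs
begin

text \<open>
  The set B of states satisfying p is a finite union of separated intervals, so its frontier is
  finite. Along a continuous path X_(Lambda n t) tends to X_t, hence chi^(n)_p tends to chi_p at every
  \<omega> for which X_t(\<omega>) avoids this finite set, and everything reduces to X_t having no atoms.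

  For that, take a dyadic time s < t close to t and restrict to paths bounded by R on [0,t], where
  \<sigma> \<ge> c > 0. Comparing the Ito Riemann sums up to s and up to t, X_t - X_s equals
  \<sigma>(X_s)(W_t - W_s) up to the drift, which is at most \<beta>(t - s), and a martingale error whose
  second moment is at most (t - s) times that of the oscillation of X on [s,t] (discrete Ito
  isometry, after clipping X at level R). So X_t = x forces W_t - W_s into a short interval
  determined by \<F>_s; the increment being independent of \<F>_s with Gaussian density at most
  (t - s)^(-1/2), this has small probability once s is close enough to t.
\<close>

section \<open>Partitions and dyadic approximation\<close>

lemma obtain_strict_mono_through:
  fixes T :: "real set"
  assumes T: "finite T" "T \<subseteq> {0..s}" and s: "0 \<le> s" "s < u"
  obtains \<tau> :: "nat \<Rightarrow> real" and N where "strict_mono \<tau>" "\<tau> 0 = 0" "\<tau> N = s" "\<tau> (Suc N) = u"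
    "T \<subseteq> \<tau> ` {..N}"
proof -
  define xs where "xs = sorted_list_of_set (insert 0 (insert s T))"
  have set_xs: "set xs = insert 0 (insert s T)" and sorted_xs: "sorted_wrt (<) xs"
    using T(1) unfolding xs_def by (simp_all del: sorted_list_of_set_insert_remove)
  have xs_range: "0 \<le> xs ! i \<and> xs ! i \<le> s" if "i < length xs" for i
    using nth_mem[OF that] set_xs T(2) s by auto
  have xs_less: "xs ! i < xs ! j" if "i < j" "j < length xs" for i j
    using sorted_wrt_nth_less[OF sorted_xs that] .
  obtain N where N: "N < length xs" "xs ! N = s"
    using set_xs by (metis in_set_conv_nth insertI1 insertI2)
  have length_xs: "length xs = Suc N"
    using N xs_less[of N "Suc N"] xs_range[of "Suc N"] by (cases "Suc N < length xs") auto
  have xs0: "xs ! 0 = 0"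
  proof -
    obtain j where "j < length xs" "xs ! j = 0"
      using set_xs by (metis in_set_conv_nth insertI1)
    then show ?thesis using xs_less[of 0 j] xs_range[of 0] by (cases j) fastforce+
  qed
  define \<tau> where "\<tau> i = (if i \<le> N then xs ! i else u + real (i - Suc N))" for i
  have "strict_mono \<tau>"
  proof (rule strict_monoI_Suc)
    fix i
    consider "Suc i \<le> N" | "i = N" | "N < i" by linarith
    then show "\<tau> i < \<tau> (Suc i)"
      by cases (use xs_less[of i "Suc i"] N s length_xs in \<open>auto simp: \<tau>_def\<close>)
  qed
  moreover have "T \<subseteq> \<tau> ` {..N}"
  proof
    fix r assume "r \<in> T"
    then obtain i where "i < length xs" "xs ! i = r" using set_xs by (metis in_set_conv_nth insertCI)
    then show "r \<in> \<tau> ` {..N}" using length_xs by (auto simp: \<tau>_def image_iff intro!: bexI[of _ i])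
  qed
  moreover have "\<tau> 0 = 0" "\<tau> N = s" "\<tau> (Suc N) = u" by (simp_all add: \<tau>_def xs0 N)
  ultimately show ?thesis using that by blast
qed

lemma floor_mult_div_tendsto: "(\<lambda>n. real_of_int \<lfloor>real (Suc n) * v\<rfloor> / real (Suc n)) \<longlonglongrightarrow> (v::real)"
proof -
  have lo: "v - 1 / real (Suc n) \<le> real_of_int \<lfloor>real (Suc n) * v\<rfloor> / real (Suc n)" for n
  proof -
    have "real (Suc n) * v - 1 \<le> real_of_int \<lfloor>real (Suc n) * v\<rfloor>" by linarith
    then have "(real (Suc n) * v - 1) / real (Suc n) \<le> real_of_int \<lfloor>real (Suc n) * v\<rfloor> / real (Suc n)"
      by (rule divide_right_mono) simp
    moreover have "(real (Suc n) * v - 1) / real (Suc n) = v - 1 / real (Suc n)"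
      by (simp add: field_simps)
    ultimately show ?thesis by simp
  qed
  have hi: "real_of_int \<lfloor>real (Suc n) * v\<rfloor> / real (Suc n) \<le> v" for n
  proof -
    have "real_of_int \<lfloor>real (Suc n) * v\<rfloor> \<le> real (Suc n) * v" by linarith
    then have "real_of_int \<lfloor>real (Suc n) * v\<rfloor> / real (Suc n) \<le> real (Suc n) * v / real (Suc n)"
      by (rule divide_right_mono) simp
    then show ?thesis by simp
  qed
  have "(\<lambda>n. v - 1 / real (Suc n)) \<longlonglongrightarrow> v - 0"
    by (intro tendsto_diff tendsto_const LIMSEQ_inverse_real_of_nat[unfolded inverse_eq_divide])
  then have l: "(\<lambda>n. v - 1 / real (Suc n)) \<longlonglongrightarrow> v" by simp
  show ?thesis
    by (rule tendsto_sandwich[OF always_eventually always_eventually l tendsto_const]) (use lo hi in blast)+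
qed

lemma Lambda_tendsto: "(\<lambda>n. Lambda n t) \<longlonglongrightarrow> t"
proof -
  have "(\<lambda>n. Lambda (Suc n) t) \<longlonglongrightarrow> t"
    unfolding Lambda_def using floor_mult_div_tendsto[of t] by simp
  then show ?thesis by (rule LIMSEQ_imp_Suc)
qed

lemma Lambda_nonneg: "0 \<le> t \<Longrightarrow> 0 \<le> Lambda n t"
  unfolding Lambda_def by simp

lemma sum_lessThan_add: "(\<Sum>i<k + n. f i) = (\<Sum>i<k. f i) + (\<Sum>i<n. f (k + i))"
  for f :: "nat \<Rightarrow> 'a::comm_monoid_add"
  by (induction n) (simp_all add: add.assoc)

definition dyadic_grid :: "nat \<Rightarrow> real \<Rightarrow> real \<Rightarrow> nat \<Rightarrow> real" where
  "dyadic_grid m s t i = min (s + real i / 2 ^ m) t"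

text \<open>Rational partition points lie among the countably many times at which \<open>oscillation\<close> and
  \<open>path_bounded\<close> below inspect the path.\<close>

definition rational_partition :: "(nat \<Rightarrow> real) \<Rightarrow> nat \<Rightarrow> real \<Rightarrow> real \<Rightarrow> bool" where
  "rational_partition a n s t \<longleftrightarrow> mono a \<and> a 0 = s \<and> a n = t \<and> (\<forall>i<n. a i < a (Suc i) \<and> a i \<in> \<rat>)"

lemma rational_partition_range:
  "rational_partition a n s t \<Longrightarrow> i \<le> n \<Longrightarrow> a i \<in> {s..t}"
  unfolding rational_partition_def by (auto dest: monoD)

lemma dyadic_grid_below:
  assumes "i < nat \<lceil>2 ^ m * (t - s)\<rceil>"
  shows "s + real i / 2 ^ m < t" "dyadic_grid m s t i = s + real i / 2 ^ m"
proof -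
  have "real i < 2 ^ m * (t - s)" using assms by linarith
  then have "real i / 2 ^ m < t - s" by (simp add: divide_less_eq mult.commute)
  then show "s + real i / 2 ^ m < t" by simp
  then show "dyadic_grid m s t i = s + real i / 2 ^ m" unfolding dyadic_grid_def by simp
qed

lemma rational_partition_dyadic_grid:
  assumes "s \<in> \<rat>" "s \<le> t"
  shows "rational_partition (dyadic_grid m s t) (nat \<lceil>2 ^ m * (t - s)\<rceil>) s t"
  unfolding rational_partition_def
proof (intro conjI allI impI)
  show "mono (dyadic_grid m s t)"
    unfolding dyadic_grid_def by (intro monoI min.mono add_left_mono divide_right_mono) simp_all
  show "dyadic_grid m s t 0 = s" using assms(2) by (simp add: dyadic_grid_def)
  have "2 ^ m * (t - s) \<le> real (nat \<lceil>2 ^ m * (t - s)\<rceil>)" by linarith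
  then have "t - s \<le> real (nat \<lceil>2 ^ m * (t - s)\<rceil>) / 2 ^ m" by (simp add: le_divide_eq mult.commute)
  then show "dyadic_grid m s t (nat \<lceil>2 ^ m * (t - s)\<rceil>) = t" by (simp add: dyadic_grid_def)
  fix i assume i: "i < nat \<lceil>2 ^ m * (t - s)\<rceil>"
  show "dyadic_grid m s t i \<in> \<rat>" using assms(1) by (simp add: dyadic_grid_below(2)[OF i])
  have "s + real i / 2 ^ m < s + real (Suc i) / 2 ^ m" by (simp add: divide_strict_right_mono)
  then show "dyadic_grid m s t i < dyadic_grid m s t (Suc i)"
    using dyadic_grid_below[OF i] unfolding dyadic_grid_def by simp
qed

lemma ito_riemann_sum_diff:
  assumes K: "2 ^ m * s = real K" and st: "s < t"
  shows "ito_riemann_sum W H t m \<omega> - ito_riemann_sum W H s m \<omega> =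
    (\<Sum>i<nat \<lceil>2 ^ m * (t - s)\<rceil>.
       H (dyadic_grid m s t i) \<omega> * (W (dyadic_grid m s t (Suc i)) \<omega> - W (dyadic_grid m s t i) \<omega>))"
proof -
  define n where "n = nat \<lceil>2 ^ m * (t - s)\<rceil>"
  define f where "f k = H (real k / 2 ^ m) \<omega> * (W (min (real (Suc k) / 2 ^ m) t) \<omega> - W (real k / 2 ^ m) \<omega>)" for k
  have "\<lceil>2 ^ m * t\<rceil> = \<lceil>2 ^ m * (t - s)\<rceil> + int K"
    using ceiling_add_of_int[of "2 ^ m * (t - s)" "int K"] K by (simp add: algebra_simps)
  moreover have "0 < 2 ^ m * (t - s)" using st by simp
  then have "0 \<le> \<lceil>2 ^ m * (t - s)\<rceil>" by linarith
  ultimately have "nat \<lceil>2 ^ m * t\<rceil> = K + n" unfolding n_def by linarith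
  then have t_sum: "ito_riemann_sum W H t m \<omega> = (\<Sum>k<K. f k) + (\<Sum>i<n. f (K + i))"
    unfolding ito_riemann_sum_def f_def by (simp add: sum_lessThan_add)
  have s_steps: "nat \<lceil>2 ^ m * s\<rceil> = K" using K by simp
  have "ito_riemann_sum W H s m \<omega> = (\<Sum>k<K. f k)"
    unfolding ito_riemann_sum_def s_steps
  proof (intro sum.cong refl)
    fix k assume "k \<in> {..<K}"
    then have "real (Suc k) / 2 ^ m \<le> s" using K by (simp add: divide_le_eq mult.commute)
    then show "H (real k / 2 ^ m) \<omega> * (W (min (real (Suc k) / 2 ^ m) s) \<omega> - W (real k / 2 ^ m) \<omega>) = f k"
      unfolding f_def using st by (simp add: min_def)
  qed
  moreover have "f (K + i) = H (dyadic_grid m s t i) \<omega> *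
      (W (dyadic_grid m s t (Suc i)) \<omega> - W (dyadic_grid m s t i) \<omega>)" if "i < n" for i
  proof -
    have "real K / 2 ^ m = s" using K by (simp add: field_simps)
    then have shift: "real (K + j) / 2 ^ m = s + real j / 2 ^ m" for j
      by (simp add: add_divide_distrib)
    have "f (K + i) = H (real (K + i) / 2 ^ m) \<omega> *
        (W (min (real (K + Suc i) / 2 ^ m) t) \<omega> - W (real (K + i) / 2 ^ m) \<omega>)"
      by (simp only: f_def add_Suc_right)
    then show ?thesis
      unfolding shift using dyadic_grid_below[of i m t s] that unfolding n_def dyadic_grid_def
      by simp
  qed
  ultimately show ?thesis
    using t_sum unfolding n_def by simp
qed

definition dyadic_below :: "real \<Rightarrow> nat \<Rightarrow> real" where
  "dyadic_below t q = real (nat (\<lceil>2 ^ q * t\<rceil> - 1)) / 2 ^ q"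

lemma dyadic_below_bounds:
  assumes t: "0 < t"
  shows "dyadic_below t q < t" "t - 1 / 2 ^ q \<le> dyadic_below t q" "0 \<le> dyadic_below t q"
    "dyadic_below t q \<in> \<rat>"
proof -
  have "1 \<le> \<lceil>2 ^ q * t\<rceil>" using t by (simp add: one_le_ceiling)
  then have j: "real (nat (\<lceil>2 ^ q * t\<rceil> - 1)) = real_of_int \<lceil>2 ^ q * t\<rceil> - 1" by simp
  have "real_of_int \<lceil>2 ^ q * t\<rceil> - 1 < 2 ^ q * t" by linarith
  then show "dyadic_below t q < t"
    unfolding dyadic_below_def j by (simp add: divide_less_eq mult.commute)
  have "2 ^ q * t - 1 \<le> real_of_int \<lceil>2 ^ q * t\<rceil> - 1" by linarith
  then have "(2 ^ q * t - 1) / 2 ^ q \<le> (real_of_int \<lceil>2 ^ q * t\<rceil> - 1) / 2 ^ q"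
    by (rule divide_right_mono) simp
  then show "t - 1 / 2 ^ q \<le> dyadic_below t q"
    unfolding dyadic_below_def j by (simp add: field_simps)
  show "0 \<le> dyadic_below t q" "dyadic_below t q \<in> \<rat>"
    unfolding dyadic_below_def by simp_all
qed

lemma dyadic_below_tendsto: "0 < t \<Longrightarrow> dyadic_below t \<longlonglongrightarrow> t"
proof -
  assume t: "0 < t"
  have "(\<lambda>q. t - 1 / 2 ^ q) \<longlonglongrightarrow> t - 0"
    by (intro tendsto_diff tendsto_const LIMSEQ_divide_realpow_zero) simp_all
  then have lower: "(\<lambda>q. t - 1 / 2 ^ q) \<longlonglongrightarrow> t" by simp
  show ?thesis
    by (rule tendsto_sandwich[OF always_eventually always_eventually lower tendsto_const])
       (use dyadic_below_bounds[OF t] in \<open>auto intro: less_imp_le\<close>)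
qed

lemma dyadic_below_on_grid:
  assumes "q \<le> m"
  shows "2 ^ m * dyadic_below t q = real (nat (\<lceil>2 ^ q * t\<rceil> - 1) * 2 ^ (m - q))"
proof -
  have "(2::real) ^ m = 2 ^ q * 2 ^ (m - q)" using assms by (simp flip: power_add)
  then show ?thesis unfolding dyadic_below_def by simp
qed

definition clip :: "real \<Rightarrow> real \<Rightarrow> real" where
  "clip R x = max (- R) (min R x)"

lemma clip_diff_le: "0 \<le> R \<Longrightarrow> \<bar>clip R x - clip R y\<bar> \<le> min \<bar>x - y\<bar> (2 * R)"
  unfolding clip_def by (auto simp: max_def min_def abs_if)

lemma clip_id: "\<bar>x\<bar> \<le> R \<Longrightarrow> clip R x = x"
  unfolding clip_def by (simp add: abs_le_iff)

lemma clip_measurable [measurable]: "clip R \<in> borel_measurable borel"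
  unfolding clip_def by measurable

section \<open>Drift integrals of continuous processes\<close>

text \<open>Paths are only given on [0,\<infinity>); precomposing with \<open>max 0\<close> extends them to the whole line,
  where Lebesgue integrals live.\<close>

lemma continuous_process_measurable_pair:
  fixes X :: "real \<Rightarrow> 'w \<Rightarrow> real"
  assumes Xm: "\<And>u. 0 \<le> u \<Longrightarrow> X u \<in> borel_measurable M"
    and Xc: "\<And>\<omega>. \<omega> \<in> space M \<Longrightarrow> continuous_on {0..} (\<lambda>u. X u \<omega>)"
  shows "(\<lambda>p. X (max 0 (snd p)) (fst p)) \<in> borel_measurable (M \<Otimes>\<^sub>M lborel)"
proof (rule borel_measurable_LIMSEQ_real)
  define A where "A n p = X (max 0 (real_of_int \<lfloor>real (Suc n) * max 0 (snd p)\<rfloor>) / real (Suc n)) (fst p)"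
    for n and p :: "'w \<times> real"
  show "A n \<in> borel_measurable (M \<Otimes>\<^sub>M lborel)" for n
  proof -
    have f: "(\<lambda>p. X (max 0 (real_of_int i) / real (Suc n)) (fst p)) \<in> borel_measurable (M \<Otimes>\<^sub>M lborel)" for i :: int
      using Xm by (intro measurable_compose[OF measurable_fst]) simp
    have g: "(\<lambda>p. \<lfloor>real (Suc n) * max 0 (snd p)\<rfloor>) \<in> (M \<Otimes>\<^sub>M lborel) \<rightarrow>\<^sub>M count_space UNIV"
      by (rule measurable_compose[OF _ measurable_real_floor]) measurable
    have "(\<lambda>p. (\<lambda>i::int. \<lambda>p. X (max 0 (real_of_int i) / real (Suc n)) (fst p)) (\<lfloor>real (Suc n) * max 0 (snd p)\<rfloor>) p)
        \<in> borel_measurable (M \<Otimes>\<^sub>M lborel)"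
      by (rule measurable_compose_countable[OF f g])
    then show ?thesis unfolding A_def by simp
  qed
  fix p :: "'w \<times> real" assume p: "p \<in> space (M \<Otimes>\<^sub>M lborel)"
  then have "fst p \<in> space M" by (auto simp: space_pair_measure)
  note c = Xc[OF this]
  let ?v = "max 0 (snd p)"
  have "(\<lambda>n. real_of_int \<lfloor>real (Suc n) * ?v\<rfloor> / real (Suc n)) \<longlonglongrightarrow> ?v" by (rule floor_mult_div_tendsto)
  then have "(\<lambda>n. max 0 (real_of_int \<lfloor>real (Suc n) * ?v\<rfloor>) / real (Suc n)) \<longlonglongrightarrow> ?v"
    by (simp add: max_def)
  then show "(\<lambda>n. A n p) \<longlonglongrightarrow> X ?v (fst p)"
    unfolding A_def
    by (intro continuous_on_tendsto_compose[OF c]) auto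
qed

lemma drift_integral_eq:
  fixes r :: real and b :: "real \<Rightarrow> real"
  assumes r: "0 \<le> r"
  shows "(LBINT u=0..r. b (X u \<omega>)) = (\<integral>u. indicator {0<..<r} u * b (X (max 0 u) \<omega>) \<partial>lborel)"
proof -
  have "(LBINT u=0..r. b (X u \<omega>)) = (\<integral>u. indicator {x. 0 < x \<and> x < r} u *\<^sub>R b (X u \<omega>) \<partial>lborel)"
    unfolding interval_lebesgue_integral_def set_lebesgue_integral_def einterval_def using r by simp
  also have "\<dots> = (\<integral>u. indicator {0<..<r} u * b (X (max 0 u) \<omega>) \<partial>lborel)"
    by (intro Bochner_Integration.integral_cong refl) (auto simp: indicator_def max_def)
  finally show ?thesis .
qed

lemma drift_integral_measurable:
  fixes X :: "real \<Rightarrow> 'w \<Rightarrow> real" and r :: real and b :: "real \<Rightarrow> real"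
  assumes Xm: "\<And>u. 0 \<le> u \<Longrightarrow> X u \<in> borel_measurable M"
    and Xc: "\<And>\<omega>. \<omega> \<in> space M \<Longrightarrow> continuous_on {0..} (\<lambda>u. X u \<omega>)"
    and b: "b \<in> borel_measurable borel" and r: "0 \<le> r"
  shows "(\<lambda>\<omega>. LBINT u=0..r. b (X u \<omega>)) \<in> borel_measurable M"
proof -
  have j: "(\<lambda>p. X (max 0 (snd p)) (fst p)) \<in> borel_measurable (M \<Otimes>\<^sub>M lborel)"
    by (rule continuous_process_measurable_pair[OF Xm Xc])
  have "(\<lambda>(\<omega>, u). indicator {0<..<r} u * b (X (max 0 u) \<omega>)) \<in> borel_measurable (M \<Otimes>\<^sub>M lborel)"
  proof -
    have m1: "(\<lambda>p. b (X (max 0 (snd p)) (fst p))) \<in> borel_measurable (M \<Otimes>\<^sub>M lborel)"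
      by (rule measurable_compose[OF j b])
    have m2: "(\<lambda>p. indicator {0<..<r} (snd p) :: real) \<in> borel_measurable (M \<Otimes>\<^sub>M lborel)"
      by measurable
    have "(\<lambda>p. indicator {0<..<r} (snd p) * b (X (max 0 (snd p)) (fst p))) \<in> borel_measurable (M \<Otimes>\<^sub>M lborel)"
      using borel_measurable_times[OF m2 m1] by simp
    then show ?thesis by (simp add: case_prod_beta')
  qed
  then have fin: "(\<lambda>\<omega>. \<integral>u. indicator {0<..<r} u * b (X (max 0 u) \<omega>) \<partial>lborel) \<in> borel_measurable M"
    by (rule lborel.borel_measurable_lebesgue_integral)
  show ?thesis unfolding drift_integral_eq[OF r] by (rule fin)
qed

lemma drift_integral_diff_le:
  fixes X :: "real \<Rightarrow> 'w \<Rightarrow> real" and s t B :: real and b :: "real \<Rightarrow> real"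
  assumes c: "continuous_on {0..} (\<lambda>u. X u \<omega>)"
    and b: "b \<in> borel_measurable borel" and bB: "\<And>x. \<bar>b x\<bar> \<le> B"
    and st: "0 \<le> s" "s \<le> t"
  shows "\<bar>(LBINT u=0..t. b (X u \<omega>)) - (LBINT u=0..s. b (X u \<omega>))\<bar> \<le> B * (t - s)"
proof -
  define h where "h u = b (X (max 0 u) \<omega>)" for u
  have "continuous_on UNIV (\<lambda>u. X (max 0 u) \<omega>)"
    by (rule continuous_on_compose2[OF c]) (auto intro!: continuous_intros)
  then have h_meas: "h \<in> borel_measurable lborel"
    unfolding h_def by (intro measurable_compose[OF _ b]) (simp add: borel_measurable_continuous_onI)
  have h_le: "\<bar>h u\<bar> \<le> B" for u unfolding h_def by (rule bB)
  have h_int: "integrable lborel (\<lambda>u. indicator {0<..<r} u * h u)" for r :: real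
  proof (rule Bochner_Integration.integrable_bound[of _ "\<lambda>u. B * indicator {0..r} u :: real"])
    show "integrable lborel (\<lambda>u. B * indicator {0..r} u :: real)"
      by (intro integrable_mult_right integrable_real_indicator) (simp_all add: emeasure_lborel_Icc_eq)
  qed (use h_meas h_le in \<open>auto simp: indicator_def abs_mult intro!: AE_I2 order_trans[OF _ abs_ge_self]\<close>)
  have B_nonneg: "0 \<le> B" using order_trans[OF abs_ge_zero h_le] .
  have "norm (\<integral>u. indicator {0<..<t} u * h u - indicator {0<..<s} u * h u \<partial>lborel)
      \<le> (\<integral>u. B * indicator {s..t} u \<partial>lborel)"
  proof (rule Bochner_Integration.integral_norm_bound_integral)
    show "integrable lborel (\<lambda>u. indicator {0<..<t} u * h u - indicator {0<..<s} u * h u)"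
      by (intro Bochner_Integration.integrable_diff h_int)
    show "integrable lborel (\<lambda>u. B * indicator {s..t} u :: real)"
      by (intro integrable_mult_right integrable_real_indicator) (simp_all add: emeasure_lborel_Icc_eq)
    show "norm (indicator {0<..<t} u * h u - indicator {0<..<s} u * h u) \<le> B * indicator {s..t} u" for u
      using st h_le[of u] B_nonneg by (auto simp: indicator_def)
  qed
  then show ?thesis
    using st unfolding drift_integral_eq[OF order.trans[OF st]] drift_integral_eq[OF st(1)] h_def[symmetric]
    by (simp add: Bochner_Integration.integral_diff[OF h_int h_int])
qed

section \<open>Truth values along a converging path\<close>

lemma finite_frontier_pos_interval:
  assumes "pos_interval S"
  shows "finite (frontier S)"
proof -
  obtain x y :: ereal and lc rc
    where S: "S = {r. (x < ereal r \<or> (lc \<and> x = ereal r)) \<and> (ereal r < y \<or> (rc \<and> ereal r = y))}"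
    using assms unfolding pos_interval_def by blast
  define U where "U = {r. x < ereal r} \<inter> {r. ereal r < y}"
  define C where "C = {r. x \<le> ereal r} \<inter> {r. ereal r \<le> y}"
  have ereal_cont: "continuous_on UNIV ereal"
    by (intro continuous_on_ereal continuous_on_id)
  have "open U" unfolding U_def
    by (intro open_Int open_Collect_less continuous_on_const ereal_cont)
  moreover have "closed C" unfolding C_def
    by (intro closed_Int closed_Collect_le continuous_on_const ereal_cont)
  moreover have "U \<subseteq> S" "S \<subseteq> C" unfolding U_def C_def S by auto
  ultimately have "frontier S \<subseteq> C - U"
    unfolding frontier_def by (meson Diff_mono closure_minimal interior_maximal)
  also have "\<dots> \<subseteq> {real_of_ereal x, real_of_ereal y}"
    unfolding U_def C_def by (auto simp: le_less)
  finally show ?thesis by (rule finite_subset) simp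
qed

lemma finite_frontier_sep_interval_union: "sep_interval_union B \<Longrightarrow> finite (frontier B)"
  unfolding sep_interval_union_def
  by (metis finite_UN_I finite_frontier_pos_interval frontier_Union_subset finite_subset)

lemma eventually_mem_iff_not_frontier:
  assumes "x \<notin> frontier B"
  shows "eventually (\<lambda>z. z \<in> B \<longleftrightarrow> x \<in> B) (nhds x)"
proof -
  have "x \<in> interior B \<or> x \<in> interior (- B)"
    using assms by (simp add: frontier_interiors)
  then show ?thesis
  proof
    assume "x \<in> interior B"
    then have "eventually (\<lambda>z. z \<in> interior B) (nhds x)" by (intro eventually_nhds_in_open) auto
    then show ?thesis by eventually_elim (use \<open>x \<in> interior B\<close> interior_subset in auto)
  next
    assume "x \<in> interior (- B)"
    then have "eventually (\<lambda>z. z \<in> interior (- B)) (nhds x)" by (intro eventually_nhds_in_open) auto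
    then show ?thesis by eventually_elim (use \<open>x \<in> interior (- B)\<close> interior_subset in auto)
  qed
qed

lemma psem_borel: "(\<And>a. I a \<in> sets borel) \<Longrightarrow> psem I p \<in> sets borel"
  by (induction p) auto

lemma chi_n_tendsto:
  assumes X: "continuous_on {0..} (\<lambda>u. X u \<omega>)" and t: "0 < t"
    and B: "\<forall>s\<ge>0. models I X \<omega> s p \<longleftrightarrow> X s \<omega> \<in> B" and not_frontier: "X t \<omega> \<notin> frontier B"
  shows "(\<lambda>n. chi_n I X n p \<omega> t) \<longlonglongrightarrow> chi I X p \<omega> t"
proof -
  have "(\<lambda>n. X (Lambda n t) \<omega>) \<longlonglongrightarrow> X t \<omega>"
    by (rule continuous_on_tendsto_compose[OF X Lambda_tendsto]) (use t Lambda_nonneg in auto)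
  then have "eventually (\<lambda>n. X (Lambda n t) \<omega> \<in> B \<longleftrightarrow> X t \<omega> \<in> B) sequentially"
    using eventually_mem_iff_not_frontier[OF not_frontier] by (rule filterlim_iff[THEN iffD1, rule_format])
  then have "eventually (\<lambda>n. chi_n I X n p \<omega> t = chi I X p \<omega> t) sequentially"
    by eventually_elim (use B t Lambda_nonneg[of t] in \<open>auto simp: chi_n_def chi_def\<close>)
  then show ?thesis by (rule tendsto_eventually)
qed

section \<open>Anti-concentration and almost sure limits\<close>

lemma normal_density_le: "0 < \<sigma> \<Longrightarrow> normal_density \<mu> \<sigma> x \<le> 1 / \<sigma>"
proof -
  assume \<sigma>: "0 < \<sigma>"
  have "\<sigma> = sqrt (\<sigma>\<^sup>2)" using \<sigma> by simp
  also have "\<dots> \<le> sqrt (2 * pi * \<sigma>\<^sup>2)"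
    using pi_gt3 by (intro real_sqrt_le_mono) (simp add: mult_le_cancel_right1)
  finally have "1 / sqrt (2 * pi * \<sigma>\<^sup>2) \<le> 1 / \<sigma>"
    using \<sigma> by (intro divide_left_mono) auto
  moreover have "exp (- (x - \<mu>)\<^sup>2 / (2 * \<sigma>\<^sup>2)) \<le> 1"
    by (simp add: divide_nonpos_pos)
  then have "normal_density \<mu> \<sigma> x \<le> 1 / sqrt (2 * pi * \<sigma>\<^sup>2)"
    unfolding normal_density_def by (intro mult_right_le_one_le) auto
  ultimately show ?thesis by linarith
qed

lemma (in prob_space) prob_close_indep_le:
  assumes indep: "indep_var borel V borel D"
    and V: "random_variable borel V" and D: "random_variable borel D"
    and intervals: "\<And>a b. a \<le> b \<Longrightarrow> prob (D -` {a..b} \<inter> space M) \<le> K * (b - a)"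
    and r: "0 \<le> r"
  shows "prob {\<omega>\<in>space M. \<bar>D \<omega> - V \<omega>\<bar> \<le> r} \<le> 2 * r * K"
proof -
  define S where "S = {p::real \<times> real. \<bar>snd p - fst p\<bar> \<le> r}"
  have "closed S" unfolding S_def by (intro closed_Collect_le continuous_intros)
  then have S: "S \<in> sets (borel \<Otimes>\<^sub>M borel)" unfolding borel_prod by simp
  interpret PD: prob_space "distr M borel D" by (rule prob_space_distr) (rule D)
  interpret PV: prob_space "distr M borel V" by (rule prob_space_distr) (rule V)
  have "emeasure M {\<omega>\<in>space M. \<bar>D \<omega> - V \<omega>\<bar> \<le> r} = emeasure M ((\<lambda>x. (V x, D x)) -` S \<inter> space M)"
    unfolding S_def by (intro arg_cong[where f="emeasure M"]) auto
  also have "\<dots> = emeasure (distr M (borel \<Otimes>\<^sub>M borel) (\<lambda>x. (V x, D x))) S"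
    by (rule emeasure_distr[symmetric]) (use D V S in auto)
  also have "\<dots> = emeasure (distr M borel V \<Otimes>\<^sub>M distr M borel D) S"
    using indep_var_distribution_eq indep by metis
  also have "\<dots> = (\<integral>\<^sup>+ v. emeasure (distr M borel D) (Pair v -` S) \<partial>distr M borel V)"
    by (rule PD.emeasure_pair_measure_alt) (use S in simp)
  also have "\<dots> \<le> (\<integral>\<^sup>+ v. ennreal (2 * r * K) \<partial>distr M borel V)"
  proof (rule nn_integral_mono)
    fix v
    have "Pair v -` S = {v - r .. v + r}" unfolding S_def by auto
    then have "emeasure (distr M borel D) (Pair v -` S) = prob (D -` {v - r .. v + r} \<inter> space M)"
      by (simp add: emeasure_distr[OF D] emeasure_eq_measure)
    also have "\<dots> \<le> ennreal (2 * r * K)"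
      using intervals[of "v - r" "v + r"] r by (intro ennreal_leI) (simp add: mult.commute)
    finally show "emeasure (distr M borel D) (Pair v -` S) \<le> ennreal (2 * r * K)" .
  qed
  also have "\<dots> = ennreal (2 * r * K)"
    using PV.emeasure_space_1 by simp
  moreover have "0 \<le> K"
    using order_trans[OF measure_nonneg intervals[of 0 1]] by simp
  ultimately show ?thesis
    using r by (simp add: emeasure_eq_measure ennreal_le_iff)
qed

lemma (in prob_space) AE_not_in_finite:
  fixes Y :: "'a \<Rightarrow> real"
  assumes E: "finite E" and Y: "random_variable borel Y" and no_atoms: "\<And>c. prob {\<omega>\<in>space M. Y \<omega> = c} = 0"
  shows "AE \<omega> in M. Y \<omega> \<notin> E"
proof -
  have "AE \<omega> in M. Y \<omega> \<noteq> c" for c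
  proof -
    have "Y -` {c} \<inter> space M \<in> events" using Y by (rule measurable_sets) simp
    moreover have "Y -` {c} \<inter> space M = {\<omega>\<in>space M. Y \<omega> = c}" by auto
    ultimately have "{\<omega>\<in>space M. Y \<omega> = c} \<in> events" by simp
    then show ?thesis using prob_Collect_eq_0 no_atoms[of c] by simp
  qed
  then have "AE \<omega> in M. \<forall>c\<in>E. Y \<omega> \<noteq> c" by (intro AE_finite_allI[OF E])
  then show ?thesis by (rule AE_mp) auto
qed

lemma (in prob_space) prob_tendsto_of_AE_indicator:
  assumes A: "\<And>n. A n \<in> events" "A' \<in> events"
    and lim: "AE \<omega> in M. (\<lambda>n. indicator (A n) \<omega> :: real) \<longlonglongrightarrow> indicator A' \<omega>"
  shows "(\<lambda>n. prob (A n)) \<longlonglongrightarrow> prob A'"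
proof -
  have "(\<lambda>n. expectation (indicator (A n))) \<longlonglongrightarrow> expectation (indicator A' :: 'a \<Rightarrow> real)"
    by (rule integral_dominated_convergence[where w="\<lambda>_. 1"]) (use A lim in \<open>auto simp: indicator_def\<close>)
  then show ?thesis using A by (simp add: Int_absorb2)
qed

section \<open>Brownian motion and its filtration\<close>

locale brownian =
  fixes M :: "'w measure" and W :: "real \<Rightarrow> 'w \<Rightarrow> real"
  assumes brownian: "brownian_motion M W"
begin

sublocale prob_space M
  using brownian unfolding brownian_motion_def by auto

lemma W_measurable [measurable]: "0 \<le> t \<Longrightarrow> W t \<in> borel_measurable M"
  using brownian unfolding brownian_motion_def by auto

lemma W_zero: "\<omega> \<in> space M \<Longrightarrow> W 0 \<omega> = 0"
  using brownian unfolding brownian_motion_def by auto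

lemma increment_distributed:
  "0 \<le> s \<Longrightarrow> s < t \<Longrightarrow>
    distributed M lborel (\<lambda>\<omega>. W t \<omega> - W s \<omega>) (\<lambda>x. ennreal (normal_density 0 (sqrt (t - s)) x))"
  using brownian unfolding brownian_motion_def by auto

lemma increments_indep:
  "strict_mono (\<tau> :: nat \<Rightarrow> real) \<Longrightarrow> 0 \<le> \<tau> 0 \<Longrightarrow>
    indep_vars (\<lambda>_. borel) (\<lambda>i \<omega>. W (\<tau> (Suc i)) \<omega> - W (\<tau> i) \<omega>) {..<k}"
  using brownian unfolding brownian_motion_def by auto

abbreviation \<F> :: "real \<Rightarrow> 'w measure" where
  "\<F> s \<equiv> bm_filtration M W s"

definition filtration_generators :: "real \<Rightarrow> 'w set set" where
  "filtration_generators s =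
     {W r -` B \<inter> space M | r B. 0 \<le> r \<and> r \<le> s \<and> B \<in> sets borel} \<union> null_sets M"

lemma filtration_generators_subset: "filtration_generators s \<subseteq> sets M"
  unfolding filtration_generators_def by auto

lemma space_filtration [simp]: "space (\<F> s) = space M"
  using filtration_generators_subset[of s] sets.sets_into_space
  unfolding bm_filtration_def filtration_generators_def[symmetric] by (subst space_measure_of) auto

lemma sets_filtration: "sets (\<F> s) = sigma_sets (space M) (filtration_generators s)"
  using filtration_generators_subset[of s] sets.sets_into_space
  unfolding bm_filtration_def filtration_generators_def[symmetric] by (subst sets_measure_of) auto

lemma subalgebra_filtration: "subalgebra M (\<F> s)"
  unfolding subalgebra_def sets_filtration
  using filtration_generators_subset by (simp add: sets.sigma_sets_subset)

lemma measurable_filtration_imp: "f \<in> measurable (\<F> s) N \<Longrightarrow> f \<in> measurable M N"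
  using measurable_from_subalg[OF subalgebra_filtration] by blast

lemma measurable_filtration_mono:
  assumes "s \<le> s'" "f \<in> measurable (\<F> s) N"
  shows "f \<in> measurable (\<F> s') N"
proof (rule measurable_from_subalg[OF _ assms(2)])
  have "filtration_generators s \<subseteq> filtration_generators s'"
    using assms(1) unfolding filtration_generators_def by fastforce
  then show "subalgebra (\<F> s') (\<F> s)"
    unfolding subalgebra_def sets_filtration by (simp add: sigma_sets_mono')
qed

lemma W_adapted: "0 \<le> r \<Longrightarrow> r \<le> s \<Longrightarrow> W r \<in> borel_measurable (\<F> s)"
  by (rule measurableI) (auto simp: sets_filtration filtration_generators_def)

definition cylinder :: "(real \<times> real set) list \<Rightarrow> 'w set" where
  "cylinder L = {\<omega>\<in>space M. \<forall>(r, B)\<in>set L. W r \<omega> \<in> B}"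

definition past_constraints :: "real \<Rightarrow> (real \<times> real set) list \<Rightarrow> bool" where
  "past_constraints s L \<longleftrightarrow> (\<forall>(r, B)\<in>set L. 0 \<le> r \<and> r \<le> s \<and> B \<in> sets borel)"

lemma cylinder_sets:
  assumes "past_constraints s L"
  shows "cylinder L \<in> events"
  unfolding cylinder_def
proof (intro sets.sets_Collect_finite_All, clarify)
  fix r B assume "(r, B) \<in> set L"
  then have [measurable]: "W r \<in> borel_measurable M" "B \<in> sets borel"
    using assms unfolding past_constraints_def by auto
  show "{\<omega> \<in> space M. W r \<omega> \<in> B} \<in> events" by measurable
qed simp

lemma cylinder_eq_vimage_increments:
  assumes L: "past_constraints s L" and \<tau>0: "\<tau> 0 = 0" and times: "fst ` set L \<subseteq> \<tau> ` {..N}"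
  obtains S where "S \<in> sets (PiM {..<N} (\<lambda>_. borel))"
    "cylinder L = (\<lambda>\<omega>. \<lambda>i\<in>{..<N}. W (\<tau> (Suc i)) \<omega> - W (\<tau> i) \<omega>) -` S \<inter> space M"
proof -
  have "\<forall>r\<in>fst ` set L. \<exists>i. i \<le> N \<and> \<tau> i = r"
  proof
    fix r assume "r \<in> fst ` set L"
    then obtain i where "i \<in> {..N}" "r = \<tau> i" using times by blast
    then show "\<exists>i. i \<le> N \<and> \<tau> i = r" by auto
  qed
  then obtain idx where idx: "\<And>r. r \<in> fst ` set L \<Longrightarrow> idx r \<le> N \<and> \<tau> (idx r) = r"
    by metis
  define S where "S = {f \<in> space (PiM {..<N} (\<lambda>_. borel::real measure)).
                         \<forall>(r, B)\<in>set L. (\<Sum>i<idx r. f i) \<in> B}"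
  have "S \<in> sets (PiM {..<N} (\<lambda>_. borel))"
    unfolding S_def
  proof (intro sets.sets_Collect_finite_All, clarsimp)
    fix r B assume rB: "(r, B) \<in> set L"
    then have "idx r \<le> N" and [measurable]: "B \<in> sets borel"
      using idx[of r] L unfolding past_constraints_def by force+
    then have [measurable]: "(\<lambda>f. \<Sum>i<idx r. f i) \<in> borel_measurable (PiM {..<N} (\<lambda>_. borel::real measure))"
      by (intro borel_measurable_sum) auto
    show "{f \<in> space (PiM {..<N} (\<lambda>_. borel)). (\<Sum>i<idx r. f i) \<in> B} \<in> sets (PiM {..<N} (\<lambda>_. borel))"
      by measurable
  qed simp
  moreover have "(\<Sum>i<idx r. (\<lambda>i\<in>{..<N}. W (\<tau> (Suc i)) \<omega> - W (\<tau> i) \<omega>) i) = W r \<omega>"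
    if \<omega>: "\<omega> \<in> space M" and rB: "(r, B) \<in> set L" for \<omega> r B
  proof -
    have r: "r \<in> fst ` set L" using rB by force
    then have "(\<Sum>i<idx r. (\<lambda>i\<in>{..<N}. W (\<tau> (Suc i)) \<omega> - W (\<tau> i) \<omega>) i) =
        (\<Sum>i<idx r. W (\<tau> (Suc i)) \<omega> - W (\<tau> i) \<omega>)"
      using idx[OF r] by (intro sum.cong) auto
    also have "\<dots> = W r \<omega>"
      using idx[OF r] \<tau>0 W_zero[OF \<omega>] by (simp add: sum_lessThan_telescope[of "\<lambda>i. W (\<tau> i) \<omega>"])
    finally show ?thesis .
  qed
  then have "cylinder L = (\<lambda>\<omega>. \<lambda>i\<in>{..<N}. W (\<tau> (Suc i)) \<omega> - W (\<tau> i) \<omega>) -` S \<inter> space M"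
    unfolding S_def cylinder_def by (auto simp: space_PiM)
  ultimately show ?thesis using that by blast
qed

lemma cylinder_indep_increment:
  assumes L: "past_constraints s L" and s: "0 \<le> s" "s < u" and C: "C \<in> sets borel"
  shows "prob (cylinder L \<inter> ((\<lambda>\<omega>. W u \<omega> - W s \<omega>) -` C \<inter> space M)) =
         prob (cylinder L) * prob ((\<lambda>\<omega>. W u \<omega> - W s \<omega>) -` C \<inter> space M)"
proof -
  have past_times: "fst ` set L \<subseteq> {0..s}"
    using L unfolding past_constraints_def by auto
  obtain \<tau> N where \<tau>: "strict_mono \<tau>" "\<tau> 0 = 0" "\<tau> N = s" "\<tau> (Suc N) = u"
    and times: "fst ` set L \<subseteq> \<tau> ` {..N}"
    by (rule obtain_strict_mono_through[OF _ past_times s]) auto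
  obtain S1 where S1: "S1 \<in> sets (PiM {..<N} (\<lambda>_. borel))"
    and cyl: "cylinder L = (\<lambda>\<omega>. \<lambda>i\<in>{..<N}. W (\<tau> (Suc i)) \<omega> - W (\<tau> i) \<omega>) -` S1 \<inter> space M"
    using cylinder_eq_vimage_increments[OF L \<tau>(2) times] .
  define S2 where "S2 = {f \<in> space (PiM {N} (\<lambda>_. borel::real measure)). f N \<in> C}"
  have S2: "S2 \<in> sets (PiM {N} (\<lambda>_. borel))"
    unfolding S2_def using C by measurable
  have incr: "(\<lambda>\<omega>. \<lambda>i\<in>{N}. W (\<tau> (Suc i)) \<omega> - W (\<tau> i) \<omega>) -` S2 \<inter> space M =
      (\<lambda>\<omega>. W u \<omega> - W s \<omega>) -` C \<inter> space M"
    unfolding S2_def using \<tau> by (auto simp: space_PiM)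
  let ?past = "\<lambda>\<omega>. \<lambda>i\<in>{..<N}. W (\<tau> (Suc i)) \<omega> - W (\<tau> i) \<omega>"
  let ?next = "\<lambda>\<omega>. \<lambda>i\<in>{N}. W (\<tau> (Suc i)) \<omega> - W (\<tau> i) \<omega>"
  have "indep_vars (\<lambda>_. borel) (\<lambda>i \<omega>. W (\<tau> (Suc i)) \<omega> - W (\<tau> i) \<omega>) {..<Suc N}"
    using increments_indep[OF \<tau>(1)] \<tau>(2) by simp
  then have indep: "indep_var (PiM {..<N} (\<lambda>_. borel)) ?past (PiM {N} (\<lambda>_. borel)) ?next"
    by (rule indep_var_restrict) auto
  have "(\<lambda>\<omega>. (?past \<omega>, ?next \<omega>)) -` (S1 \<times> S2) \<inter> space M =
      (?past -` S1 \<inter> space M) \<inter> (?next -` S2 \<inter> space M)"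
    by auto
  with indep_varD[OF indep S1 S2] show ?thesis
    unfolding cyl incr[symmetric] by simp
qed

definition past_events :: "real \<Rightarrow> 'w set set" where
  "past_events s = {cylinder L | L. past_constraints s L} \<union> null_sets M"

definition increment_events :: "real \<Rightarrow> real \<Rightarrow> 'w set set" where
  "increment_events s u = {(\<lambda>\<omega>. W u \<omega> - W s \<omega>) -` C \<inter> space M | C. C \<in> sets borel}"

lemma past_events_Int_stable: "Int_stable (past_events s)"
proof (rule Int_stableI)
  fix a b assume a: "a \<in> past_events s" and b: "b \<in> past_events s"
  show "a \<inter> b \<in> past_events s"
  proof (cases "a \<in> null_sets M \<or> b \<in> null_sets M")
    case True
    moreover have "a \<in> events" "b \<in> events"
      using a b cylinder_sets unfolding past_events_def by auto
    ultimately show ?thesis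
      unfolding past_events_def by (auto intro: null_set_Int1 null_set_Int2)
  next
    case False
    then obtain L1 L2 where "a = cylinder L1" "past_constraints s L1" "b = cylinder L2" "past_constraints s L2"
      using a b unfolding past_events_def by auto
    then have "a \<inter> b = cylinder (L1 @ L2)" "past_constraints s (L1 @ L2)"
      unfolding cylinder_def past_constraints_def by auto
    then show ?thesis unfolding past_events_def by blast
  qed
qed

lemma increment_events_Int_stable: "Int_stable (increment_events s u)"
proof (rule Int_stableI)
  fix a b assume "a \<in> increment_events s u" "b \<in> increment_events s u"
  then obtain C1 C2 where "C1 \<in> sets borel" "C2 \<in> sets borel"
    "a = (\<lambda>\<omega>. W u \<omega> - W s \<omega>) -` C1 \<inter> space M" "b = (\<lambda>\<omega>. W u \<omega> - W s \<omega>) -` C2 \<inter> space M"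
    unfolding increment_events_def by auto
  then show "a \<inter> b \<in> increment_events s u"
    unfolding increment_events_def by (intro CollectI exI[of _ "C1 \<inter> C2"]) auto
qed

lemma indep_past_increment_events:
  assumes s: "0 \<le> s" "s < u"
  shows "indep_set (past_events s) (increment_events s u)"
proof (subst indep_sets2_eq, intro conjI ballI)
  show "past_events s \<subseteq> events" using cylinder_sets unfolding past_events_def by auto
  show "increment_events s u \<subseteq> events" using s unfolding increment_events_def by auto
  fix a b assume a: "a \<in> past_events s" and b: "b \<in> increment_events s u"
  then obtain C where C: "C \<in> sets borel" "b = (\<lambda>\<omega>. W u \<omega> - W s \<omega>) -` C \<inter> space M"
    unfolding increment_events_def by auto
  show "prob (a \<inter> b) = prob a * prob b"
  proof (cases "a \<in> null_sets M")
    case True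
    then have "a \<inter> b \<in> null_sets M" using C s by (auto intro: null_set_Int2)
    then show ?thesis using True by (simp add: measure_eq_0_null_sets)
  next
    case False
    then show ?thesis
      using a cylinder_indep_increment[OF _ s C(1)] C(2) unfolding past_events_def by auto
  qed
qed

lemma sets_filtration_subset_past_events: "sets (\<F> s) \<subseteq> sigma_sets (space M) (past_events s)"
  unfolding sets_filtration
proof (rule sigma_sets_mono')
  have "W r -` B \<inter> space M = cylinder [(r, B)]" for r B
    unfolding cylinder_def by auto
  then show "filtration_generators s \<subseteq> past_events s"
    unfolding filtration_generators_def past_events_def past_constraints_def by fastforce
qed

theorem indep_var_filtration_increment:
  assumes s: "0 \<le> s" "s < u" and V: "V \<in> borel_measurable (\<F> s)"
  shows "indep_var borel V borel (\<lambda>\<omega>. W u \<omega> - W s \<omega>)"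
  unfolding indep_var_eq
proof (intro conjI)
  show "random_variable borel V" using measurable_filtration_imp[OF V] .
  show "random_variable borel (\<lambda>\<omega>. W u \<omega> - W s \<omega>)" using s by simp
  have "indep_set (sigma_sets (space M) (past_events s)) (sigma_sets (space M) (increment_events s u))"
    using indep_past_increment_events[OF s] past_events_Int_stable increment_events_Int_stable
    by (rule indep_set_sigma_sets)
  moreover have "sigma_sets (space M) {V -` A \<inter> space M |A. A \<in> sets borel} \<subseteq>
      sigma_sets (space M) (past_events s)"
    using measurable_sets[OF V] sets_filtration_subset_past_events by (intro sigma_sets_mono) auto
  ultimately show "indep_set (sigma_sets (space M) {V -` A \<inter> space M |A. A \<in> sets borel})
     (sigma_sets (space M) {(\<lambda>\<omega>. W u \<omega> - W s \<omega>) -` A \<inter> space M |A. A \<in> sets borel})"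
    unfolding indep_set_def increment_events_def
    by (elim indep_sets_mono_sets) (simp split: bool.split)
qed

end

section \<open>Gaussian increments and the discrete Ito isometry\<close>

context brownian
begin

lemma increment_moments:
  assumes s: "0 \<le> s" "s < u"
  shows "integrable M (\<lambda>\<omega>. W u \<omega> - W s \<omega>)" "expectation (\<lambda>\<omega>. W u \<omega> - W s \<omega>) = 0"
    "integrable M (\<lambda>\<omega>. (W u \<omega> - W s \<omega>)\<^sup>2)" "expectation (\<lambda>\<omega>. (W u \<omega> - W s \<omega>)\<^sup>2) = u - s"
proof -
  note D = increment_distributed[OF s]
  have sd: "0 < sqrt (u - s)" using s by simp
  show "integrable M (\<lambda>\<omega>. W u \<omega> - W s \<omega>)"
    using distributed_integrable[OF D, of "\<lambda>x. x"] integrable_normal_moment_nz_1[OF sd] by simp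
  show mean: "expectation (\<lambda>\<omega>. W u \<omega> - W s \<omega>) = 0"
    using normal_distributed_expectation[OF sd D] by simp
  show "integrable M (\<lambda>\<omega>. (W u \<omega> - W s \<omega>)\<^sup>2)"
    using distributed_integrable[OF D, of "\<lambda>x. x\<^sup>2"] integrable_normal_moment[OF sd, of 0 2] by simp
  show "expectation (\<lambda>\<omega>. (W u \<omega> - W s \<omega>)\<^sup>2) = u - s"
    using normal_distributed_variance[OF sd D] mean s by simp
qed

lemma prob_increment_interval_le:
  assumes s: "0 \<le> s" "s < u" and ab: "a \<le> b"
  shows "prob ((\<lambda>\<omega>. W u \<omega> - W s \<omega>) -` {a..b} \<inter> space M) \<le> 1 / sqrt (u - s) * (b - a)"
proof -
  have sd: "0 < sqrt (u - s)" using s by simp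
  have "emeasure M ((\<lambda>\<omega>. W u \<omega> - W s \<omega>) -` {a..b} \<inter> space M)
      = (\<integral>\<^sup>+x. ennreal (normal_density 0 (sqrt (u - s)) x) * indicator {a..b} x \<partial>lborel)"
    by (rule distributed_emeasure[OF increment_distributed[OF s]]) simp
  also have "\<dots> \<le> (\<integral>\<^sup>+x. ennreal (1 / sqrt (u - s)) * indicator {a..b} x \<partial>lborel)"
    by (intro nn_integral_mono mult_right_mono ennreal_leI normal_density_le[OF sd]) auto
  also have "\<dots> = ennreal (1 / sqrt (u - s) * (b - a))"
    using ab sd by (simp add: nn_integral_cmult_indicator ennreal_mult[symmetric])
  finally show ?thesis
    using ab sd by (simp add: emeasure_eq_measure ennreal_le_iff)
qed

lemma prob_increment_close_le:
  assumes s: "0 \<le> s" "s < u" and V: "V \<in> borel_measurable (\<F> s)" and r: "0 \<le> r"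
  shows "prob {\<omega>\<in>space M. \<bar>(W u \<omega> - W s \<omega>) - V \<omega>\<bar> \<le> r} \<le> 2 * r / sqrt (u - s)"
  using prob_close_indep_le[OF indep_var_filtration_increment[OF s V]
      measurable_filtration_imp[OF V] _ prob_increment_interval_le[OF s] r] s
  by simp

definition martingale_transform :: "(nat \<Rightarrow> real) \<Rightarrow> (nat \<Rightarrow> 'w \<Rightarrow> real) \<Rightarrow> nat \<Rightarrow> 'w \<Rightarrow> real" where
  "martingale_transform a g n \<omega> = (\<Sum>i<n. g i \<omega> * (W (a (Suc i)) \<omega> - W (a i) \<omega>))"

lemma martingale_transform_adapted:
  assumes a: "mono a" "0 \<le> a 0" and g: "\<forall>i<n. g i \<in> borel_measurable (\<F> (a i))"
  shows "martingale_transform a g n \<in> borel_measurable (\<F> (a n))"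
  unfolding martingale_transform_def
proof (intro borel_measurable_sum borel_measurable_times borel_measurable_diff)
  fix i assume "i \<in> {..<n}"
  then have i: "i < n" "Suc i \<le> n" by auto
  have "0 \<le> a i" "a i \<le> a n" "0 \<le> a (Suc i)" "a (Suc i) \<le> a n"
    using monoD[OF a(1), of 0 i] monoD[OF a(1), of i n] monoD[OF a(1), of 0 "Suc i"]
      monoD[OF a(1), of "Suc i" n] i a(2) by auto
  then show "g i \<in> borel_measurable (\<F> (a n))" "W (a (Suc i)) \<in> borel_measurable (\<F> (a n))"
    "W (a i) \<in> borel_measurable (\<F> (a n))"
    using g i(1) measurable_filtration_mono[of "a i" "a n"] W_adapted by auto
qed

text \<open>The cross term vanishes because the increment is centred and independent of \<F> s.\<close>

lemma expectation_square_add_increment: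
  assumes s: "0 \<le> s" "s < u"
    and S: "S \<in> borel_measurable (\<F> s)" "integrable M (\<lambda>\<omega>. (S \<omega>)\<^sup>2)"
    and g: "g \<in> borel_measurable (\<F> s)" "\<forall>\<omega>\<in>space M. \<bar>g \<omega>\<bar> \<le> C"
  shows "integrable M (\<lambda>\<omega>. (S \<omega> + g \<omega> * (W u \<omega> - W s \<omega>))\<^sup>2)"
    "expectation (\<lambda>\<omega>. (S \<omega> + g \<omega> * (W u \<omega> - W s \<omega>))\<^sup>2) =
       expectation (\<lambda>\<omega>. (S \<omega>)\<^sup>2) + expectation (\<lambda>\<omega>. (g \<omega>)\<^sup>2) * (u - s)"
proof -
  define D where "D \<omega> = W u \<omega> - W s \<omega>" for \<omega>
  note S_meas = measurable_filtration_imp[OF S(1)]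
  note g_meas = measurable_filtration_imp[OF g(1)]
  have D: "integrable M D" "integrable M (\<lambda>\<omega>. (D \<omega>)\<^sup>2)"
    "expectation D = 0" "expectation (\<lambda>\<omega>. (D \<omega>)\<^sup>2) = u - s"
    using increment_moments[OF s] unfolding D_def by auto
  have indep_cross: "indep_var borel (\<lambda>\<omega>. S \<omega> * g \<omega>) borel D"
    unfolding D_def by (rule indep_var_filtration_increment[OF s]) (use S g in simp)
  have "indep_var borel (\<lambda>\<omega>. (g \<omega>)\<^sup>2) borel D"
    unfolding D_def by (rule indep_var_filtration_increment[OF s]) (use g in simp)
  then have indep_square: "indep_var borel (\<lambda>\<omega>. (g \<omega>)\<^sup>2) borel (\<lambda>\<omega>. (D \<omega>)\<^sup>2)"
    using indep_var_compose[of borel _ borel D "\<lambda>x. x" borel "\<lambda>x. x\<^sup>2" borel] by (simp add: comp_def)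
  have Sg: "integrable M (\<lambda>\<omega>. S \<omega> * g \<omega>)"
  proof (rule Bochner_Integration.integrable_bound)
    show "integrable M (\<lambda>\<omega>. C * S \<omega>)"
      using square_integrable_imp_integrable[OF S_meas S(2)] by simp
    show "AE \<omega> in M. norm (S \<omega> * g \<omega>) \<le> norm (C * S \<omega>)"
      using g(2) by (intro AE_I2) (auto simp: abs_mult mult.commute[of "\<bar>C\<bar>"] intro!: mult_left_mono)
  qed (use S_meas g_meas in simp)
  have g2: "integrable M (\<lambda>\<omega>. (g \<omega>)\<^sup>2)"
    using g(2) g_meas
    by (intro integrable_const_bound[where B="C\<^sup>2"] AE_I2) (auto simp: abs_le_square_iff[symmetric])
  have cross: "integrable M (\<lambda>\<omega>. S \<omega> * g \<omega> * D \<omega>)" "expectation (\<lambda>\<omega>. S \<omega> * g \<omega> * D \<omega>) = 0"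
    using indep_var_integrable[OF indep_cross Sg D(1)] indep_var_lebesgue_integral[OF indep_cross Sg D(1)] D(3)
    by auto
  have square: "integrable M (\<lambda>\<omega>. (g \<omega>)\<^sup>2 * (D \<omega>)\<^sup>2)"
    "expectation (\<lambda>\<omega>. (g \<omega>)\<^sup>2 * (D \<omega>)\<^sup>2) = expectation (\<lambda>\<omega>. (g \<omega>)\<^sup>2) * (u - s)"
    using indep_var_integrable[OF indep_square g2 D(2)] indep_var_lebesgue_integral[OF indep_square g2 D(2)] D(4)
    by auto
  have expand: "(S \<omega> + g \<omega> * D \<omega>)\<^sup>2 = (S \<omega>)\<^sup>2 + 2 * (S \<omega> * g \<omega> * D \<omega>) + (g \<omega>)\<^sup>2 * (D \<omega>)\<^sup>2" for \<omega>
    by (simp add: power2_eq_square algebra_simps)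
  show "integrable M (\<lambda>\<omega>. (S \<omega> + g \<omega> * (W u \<omega> - W s \<omega>))\<^sup>2)"
    "expectation (\<lambda>\<omega>. (S \<omega> + g \<omega> * (W u \<omega> - W s \<omega>))\<^sup>2) =
       expectation (\<lambda>\<omega>. (S \<omega>)\<^sup>2) + expectation (\<lambda>\<omega>. (g \<omega>)\<^sup>2) * (u - s)"
    unfolding D_def[symmetric] expand using S(2) cross square by simp_all
qed

lemma martingale_transform_isometry:
  assumes a: "mono a" "0 \<le> a 0" "\<forall>i<n. a i < a (Suc i)"
    and g: "\<forall>i<n. g i \<in> borel_measurable (\<F> (a i))" and g_bounded: "\<forall>i<n. \<forall>\<omega>\<in>space M. \<bar>g i \<omega>\<bar> \<le> C"
  shows "integrable M (\<lambda>\<omega>. (martingale_transform a g n \<omega>)\<^sup>2) \<and>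
         expectation (\<lambda>\<omega>. (martingale_transform a g n \<omega>)\<^sup>2) =
           (\<Sum>i<n. expectation (\<lambda>\<omega>. (g i \<omega>)\<^sup>2) * (a (Suc i) - a i))"
  using a(3) g g_bounded
proof (induction n)
  case 0
  then show ?case by (simp add: martingale_transform_def)
next
  case (Suc n)
  have "0 \<le> a n" "a n < a (Suc n)"
    using monoD[OF a(1), of 0 n] a(2) Suc.prems by auto
  moreover have "martingale_transform a g n \<in> borel_measurable (\<F> (a n))"
    using martingale_transform_adapted[OF a(1,2)] Suc.prems by auto
  moreover have "martingale_transform a g (Suc n) \<omega> =
      martingale_transform a g n \<omega> + g n \<omega> * (W (a (Suc n)) \<omega> - W (a n) \<omega>)" for \<omega>
    by (simp add: martingale_transform_def)
  ultimately show ?case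
    using expectation_square_add_increment[of "a n" "a (Suc n)" "martingale_transform a g n" "g n" C] Suc
    by simp
qed

end

section \<open>The solution has no atoms\<close>

locale sde = brownian M W for M :: "'w measure" and W +
  fixes b \<sigma> :: "real \<Rightarrow> real" and \<xi> :: real and X :: "real \<Rightarrow> 'w \<Rightarrow> real" and L \<beta> :: real
  assumes sigma_nondegenerate: "\<And>K. compact K \<Longrightarrow> K \<noteq> {} \<Longrightarrow> Inf (\<sigma> ` K) > 0"
    and sigma_lipschitz: "L-lipschitz_on UNIV \<sigma>"
    and b_measurable: "b \<in> borel_measurable borel"
    and b_bounded: "\<And>x. \<bar>b x\<bar> \<le> \<beta>"
    and solution: "strong_solution M W b \<sigma> \<xi> X"
begin

lemma X_continuous: "\<omega> \<in> space M \<Longrightarrow> continuous_on {0..} (\<lambda>t. X t \<omega>)"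
  using solution unfolding strong_solution_def by auto

lemma X_adapted: "0 \<le> t \<Longrightarrow> X t \<in> borel_measurable (\<F> t)"
  using solution unfolding strong_solution_def by auto

lemma X_measurable: "0 \<le> t \<Longrightarrow> X t \<in> borel_measurable M"
  using measurable_filtration_imp[OF X_adapted] .

definition riemann_sum :: "nat \<Rightarrow> real \<Rightarrow> 'w \<Rightarrow> real" where
  "riemann_sum m r = ito_riemann_sum W (\<lambda>s \<omega>. \<sigma> (X s \<omega>)) r m"

definition diffusion_part :: "real \<Rightarrow> 'w \<Rightarrow> real" where
  "diffusion_part r \<omega> = X r \<omega> - \<xi> - (LBINT u=0..r. b (X u \<omega>))"

lemma riemann_sum_converges:
  "0 \<le> t \<Longrightarrow> 0 < \<epsilon> \<Longrightarrow>
    (\<lambda>m. prob {\<omega>\<in>space M. \<epsilon> < \<bar>riemann_sum m t \<omega> - diffusion_part t \<omega>\<bar>}) \<longlonglongrightarrow> 0"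
  using solution unfolding strong_solution_def converges_in_prob_def riemann_sum_def diffusion_part_def
  by auto

lemma L_nonneg: "0 \<le> L"
  using lipschitz_on_nonneg[OF sigma_lipschitz] .

lemma sigma_continuous: "continuous_on UNIV \<sigma>"
  using lipschitz_on_continuous_on[OF sigma_lipschitz] .

lemma sigma_measurable [measurable]: "\<sigma> \<in> borel_measurable borel"
  using sigma_continuous by (simp add: borel_measurable_continuous_onI)

lemma sigma_diff_le: "\<bar>\<sigma> x - \<sigma> y\<bar> \<le> L * \<bar>x - y\<bar>"
  using lipschitz_onD[OF sigma_lipschitz, of x y] by (simp add: dist_real_def)

lemma beta_nonneg: "0 \<le> \<beta>"
  using b_bounded[of 0] by linarith

lemma diffusion_part_measurable: "0 \<le> r \<Longrightarrow> diffusion_part r \<in> borel_measurable M"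
  unfolding diffusion_part_def
  using drift_integral_measurable[of X M b r] X_measurable X_continuous b_measurable by simp

lemma riemann_sum_measurable:
  assumes r: "0 \<le> r"
  shows "riemann_sum m r \<in> borel_measurable M"
  unfolding riemann_sum_def ito_riemann_sum_def
proof (intro borel_measurable_sum)
  fix k
  have "0 \<le> real k / 2 ^ m" "0 \<le> min (real (Suc k) / 2 ^ m) r" using r by simp_all
  then show "(\<lambda>\<omega>. \<sigma> (X (real k / 2 ^ m) \<omega>) * (W (min (real (Suc k) / 2 ^ m) r) \<omega> - W (real k / 2 ^ m) \<omega>))
      \<in> borel_measurable M"
    using X_measurable W_measurable by measurable
qed

lemma sigma_bounded_below: "0 < R \<Longrightarrow> \<exists>c>0. \<forall>x. \<bar>x\<bar> \<le> R \<longrightarrow> c \<le> \<sigma> x"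
proof -
  assume R: "0 < R"
  have K: "compact {-R..R}" "{-R..R} \<noteq> {}" using R by auto
  have "compact (\<sigma> ` {-R..R})"
    by (rule compact_continuous_image[OF continuous_on_subset[OF sigma_continuous] K(1)]) simp
  then have "bdd_below (\<sigma> ` {-R..R})" by (intro bounded_imp_bdd_below compact_imp_bounded)
  then have "\<forall>x. \<bar>x\<bar> \<le> R \<longrightarrow> Inf (\<sigma> ` {-R..R}) \<le> \<sigma> x"
    by (auto simp: abs_le_iff intro: cInf_lower)
  then show ?thesis using sigma_nondegenerate[OF K] by blast
qed

definition path_bounded :: "real \<Rightarrow> real \<Rightarrow> 'w set" where
  "path_bounded t R = {\<omega>\<in>space M. \<forall>u\<in>\<rat> \<inter> {0..t}. \<bar>X u \<omega>\<bar> \<le> R}"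

lemma path_bounded_sets: "path_bounded t R \<in> events"
  unfolding path_bounded_def
proof (rule sets.sets_Collect_countable_All')
  fix u assume "u \<in> \<rat> \<inter> {0..t}"
  then have [measurable]: "X u \<in> borel_measurable M" using X_measurable by simp
  show "{\<omega> \<in> space M. \<bar>X u \<omega>\<bar> \<le> R} \<in> events" by measurable
qed (simp add: countable_rat)

lemma prob_not_path_bounded_tendsto: "(\<lambda>k. prob (space M - path_bounded t (real k))) \<longlonglongrightarrow> 0"
proof -
  have "incseq (\<lambda>k. path_bounded t (real k))"
    unfolding incseq_def path_bounded_def by (auto intro: order_trans)
  then have "(\<lambda>k. prob (path_bounded t (real k))) \<longlonglongrightarrow> prob (\<Union>k. path_bounded t (real k))"
    by (intro finite_Lim_measure_incseq) (auto simp: path_bounded_sets)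
  moreover have "(\<Union>k. path_bounded t (real k)) = space M"
  proof (intro antisym subsetI)
    fix \<omega> assume \<omega>: "\<omega> \<in> space M"
    have "compact ((\<lambda>u. X u \<omega>) ` {0..max 0 t})"
      by (rule compact_continuous_image[OF continuous_on_subset[OF X_continuous[OF \<omega>]]]) auto
    then obtain B where "\<forall>u\<in>{0..max 0 t}. \<bar>X u \<omega>\<bar> \<le> B"
      using compact_imp_bounded bounded_iff by (metis image_eqI real_norm_def)
    moreover obtain k :: nat where "B \<le> real k" using real_arch_simple by blast
    ultimately have "\<bar>X u \<omega>\<bar> \<le> real k" if "u \<in> \<rat> \<inter> {0..t}" for u
      using that by force
    then have "\<omega> \<in> path_bounded t (real k)"
      unfolding path_bounded_def using \<omega> by blast
    then show "\<omega> \<in> (\<Union>k. path_bounded t (real k))" by blast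
  qed (auto simp: path_bounded_def)
  ultimately have "(\<lambda>k. 1 - prob (path_bounded t (real k))) \<longlonglongrightarrow> 1 - 1"
    using prob_space by (intro tendsto_diff tendsto_const) simp
  then show ?thesis by (simp add: prob_compl path_bounded_sets)
qed

text \<open>The modulus of continuity of X on [s,t], truncated at 2R and taken over rational times
  so that it is measurable; it dominates the clipped integrand differences below.\<close>

definition oscillation :: "real \<Rightarrow> real \<Rightarrow> real \<Rightarrow> 'w \<Rightarrow> real" where
  "oscillation t R s \<omega> = L * (SUP u\<in>\<rat> \<inter> {s..t}. min \<bar>X u \<omega> - X s \<omega>\<bar> (2 * R))"

lemma oscillation_bdd: "bdd_above ((\<lambda>u. min \<bar>X u \<omega> - X s \<omega>\<bar> (2 * R)) ` A)"
  by (rule bdd_aboveI[of _ "2 * R"]) auto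

lemma oscillation_measurable:
  assumes "0 \<le> s"
  shows "oscillation t R s \<in> borel_measurable M"
proof -
  have "(\<lambda>\<omega>. SUP u\<in>\<rat> \<inter> {s..t}. min \<bar>X u \<omega> - X s \<omega>\<bar> (2 * R)) \<in> borel_measurable M"
  proof (rule borel_measurable_cSUP)
    fix u assume "u \<in> \<rat> \<inter> {s..t}"
    then have [measurable]: "X u \<in> borel_measurable M" "X s \<in> borel_measurable M"
      using X_measurable assms by auto
    show "(\<lambda>\<omega>. min \<bar>X u \<omega> - X s \<omega>\<bar> (2 * R)) \<in> borel_measurable M" by measurable
  qed (simp_all add: countable_rat oscillation_bdd)
  then show ?thesis unfolding oscillation_def by simp
qed

lemma oscillation_ge: "u \<in> \<rat> \<inter> {s..t} \<Longrightarrow> L * min \<bar>X u \<omega> - X s \<omega>\<bar> (2 * R) \<le> oscillation t R s \<omega>"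
  unfolding oscillation_def using L_nonneg by (intro mult_left_mono cSUP_upper oscillation_bdd) auto

lemma oscillation_bounds:
  assumes "0 \<le> R" "s \<in> \<rat>" "s \<le> t"
  shows "0 \<le> oscillation t R s \<omega>" "oscillation t R s \<omega> \<le> L * (2 * R)"
proof -
  have s: "s \<in> \<rat> \<inter> {s..t}" using assms by simp
  show "0 \<le> oscillation t R s \<omega>"
    using oscillation_ge[OF s, of \<omega> R] assms(1) by simp
  have "(SUP u\<in>\<rat> \<inter> {s..t}. min \<bar>X u \<omega> - X s \<omega>\<bar> (2 * R)) \<le> 2 * R"
    using s by (intro cSUP_least) auto
  then show "oscillation t R s \<omega> \<le> L * (2 * R)"
    unfolding oscillation_def using L_nonneg by (rule mult_left_mono)
qed

lemma oscillation_square_integrable: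
  assumes "0 \<le> R" "s \<in> \<rat>" "0 \<le> s" "s \<le> t"
  shows "integrable M (\<lambda>\<omega>. (oscillation t R s \<omega>)\<^sup>2)"
proof (rule integrable_const_bound[where B="(L * (2 * R))\<^sup>2"])
  show "AE \<omega> in M. norm ((oscillation t R s \<omega>)\<^sup>2) \<le> (L * (2 * R))\<^sup>2"
    using oscillation_bounds[OF assms(1,2,4)] by (intro AE_I2) (simp add: power_mono)
qed (use oscillation_measurable[OF assms(3)] in simp)

lemma oscillation_dyadic_below_tendsto:
  assumes t: "0 < t" and R: "0 \<le> R" and \<omega>: "\<omega> \<in> space M"
  shows "(\<lambda>q. oscillation t R (dyadic_below t q) \<omega>) \<longlonglongrightarrow> 0"
proof (rule LIMSEQ_I)
  fix e :: real assume e: "0 < e"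
  define e' where "e' = e / (2 * (L + 1))"
  have e': "0 < e'" unfolding e'_def using e L_nonneg by simp
  have "continuous (at t within {0..}) (\<lambda>u. X u \<omega>)"
    using X_continuous[OF \<omega>] t unfolding continuous_on_eq_continuous_within by simp
  then obtain d where d: "0 < d" "\<And>u. u \<in> {0..} \<Longrightarrow> dist u t < d \<Longrightarrow> dist (X u \<omega>) (X t \<omega>) < e'"
    using e' unfolding continuous_within_eps_delta by blast
  obtain N where N: "\<And>q. N \<le> q \<Longrightarrow> dist (dyadic_below t q) t < d"
    using dyadic_below_tendsto[OF t] d(1) unfolding lim_sequentially by blast
  show "\<exists>N. \<forall>q\<ge>N. norm (oscillation t R (dyadic_below t q) \<omega> - 0) < e"
  proof (intro exI allI impI)
    fix q assume "N \<le> q"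
    define s where "s = dyadic_below t q"
    have s: "0 \<le> s" "s < t" "s \<in> \<rat>" "dist s t < d"
      using dyadic_below_bounds[OF t] N[OF \<open>N \<le> q\<close>] unfolding s_def by auto
    have close: "\<bar>X u \<omega> - X t \<omega>\<bar> < e'" if "s \<le> u" "u \<le> t" for u
      using d(2)[of u] s that by (simp add: dist_real_def)
    have "min \<bar>X u \<omega> - X s \<omega>\<bar> (2 * R) \<le> 2 * e'" if "u \<in> \<rat> \<inter> {s..t}" for u
      using close[of u] close[of s] that s by auto
    then have "(SUP u\<in>\<rat> \<inter> {s..t}. min \<bar>X u \<omega> - X s \<omega>\<bar> (2 * R)) \<le> 2 * e'"
      using s by (intro cSUP_least) auto
    then have "oscillation t R s \<omega> \<le> L * (2 * e')"
      unfolding oscillation_def using L_nonneg by (rule mult_left_mono)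
    also have "\<dots> < e" unfolding e'_def using e L_nonneg by (simp add: field_simps)
    finally show "norm (oscillation t R s \<omega> - 0) < e" 
      using oscillation_bounds(1)[OF R s(3)] s by simp
  qed
qed

lemma oscillation_L2_tendsto:
  assumes t: "0 < t" and R: "0 \<le> R"
  shows "(\<lambda>q. expectation (\<lambda>\<omega>. (oscillation t R (dyadic_below t q) \<omega>)\<^sup>2)) \<longlonglongrightarrow> 0"
proof -
  have "(\<lambda>q. expectation (\<lambda>\<omega>. (oscillation t R (dyadic_below t q) \<omega>)\<^sup>2)) \<longlonglongrightarrow> expectation (\<lambda>\<omega>. 0::real)"
  proof (rule integral_dominated_convergence[where w="\<lambda>_. (L * (2 * R))\<^sup>2"])
    show "(\<lambda>\<omega>. (oscillation t R (dyadic_below t q) \<omega>)\<^sup>2) \<in> borel_measurable M" for q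
      using oscillation_measurable[OF dyadic_below_bounds(3)[OF t]] by simp
    show "AE \<omega> in M. (\<lambda>q. (oscillation t R (dyadic_below t q) \<omega>)\<^sup>2) \<longlonglongrightarrow> 0"
      using oscillation_dyadic_below_tendsto[OF t R] tendsto_power[where n=2 and a=0] by (intro AE_I2) force
    show "AE \<omega> in M. norm ((oscillation t R (dyadic_below t q) \<omega>)\<^sup>2) \<le> (L * (2 * R))\<^sup>2" for q
      using oscillation_bounds[OF R dyadic_below_bounds(4)[OF t] less_imp_le[OF dyadic_below_bounds(1)[OF t]]]
      by (intro AE_I2) (simp add: power_mono)
  qed simp_all
  then show ?thesis by simp
qed

text \<open>Clipping at level R keeps the integrands bounded, as the discrete Ito isometry requires.\<close>

definition clipped_diff :: "real \<Rightarrow> (nat \<Rightarrow> real) \<Rightarrow> real \<Rightarrow> nat \<Rightarrow> 'w \<Rightarrow> real" where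
  "clipped_diff R a s i \<omega> = \<sigma> (clip R (X (a i) \<omega>)) - \<sigma> (clip R (X s \<omega>))"

lemma clipped_diff_adapted:
  assumes a: "rational_partition a n s t" and s: "0 \<le> s" and i: "i \<le> n"
  shows "clipped_diff R a s i \<in> borel_measurable (\<F> (a i))"
proof -
  have ai: "s \<le> a i" using rational_partition_range[OF a i] by simp
  have [measurable]: "X (a i) \<in> borel_measurable (\<F> (a i))" "X s \<in> borel_measurable (\<F> (a i))"
    using X_adapted ai s measurable_filtration_mono[OF ai X_adapted[OF s]] by simp_all
  show ?thesis unfolding clipped_diff_def by measurable
qed

lemma clipped_diff_le:
  assumes "0 \<le> R"
  shows "\<bar>clipped_diff R a s i \<omega>\<bar> \<le> L * min \<bar>X (a i) \<omega> - X s \<omega>\<bar> (2 * R)"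
  unfolding clipped_diff_def
  using sigma_diff_le[of "clip R (X (a i) \<omega>)"] clip_diff_le[OF assms] L_nonneg
  by (meson mult_left_mono order_trans)

lemma clipped_diff_bounded: "0 \<le> R \<Longrightarrow> \<bar>clipped_diff R a s i \<omega>\<bar> \<le> L * (2 * R)"
  using clipped_diff_le[of R a s i \<omega>] L_nonneg by (meson min.cobounded2 mult_left_mono order_trans)

lemma clipped_diff_le_oscillation:
  assumes a: "rational_partition a n s t" and R: "0 \<le> R" and i: "i < n"
  shows "\<bar>clipped_diff R a s i \<omega>\<bar> \<le> oscillation t R s \<omega>"
proof -
  have "a i \<in> \<rat> \<inter> {s..t}"
    using a i rational_partition_range[OF a, of i] unfolding rational_partition_def by auto
  then show ?thesis using clipped_diff_le[OF R] oscillation_ge by (meson order_trans)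
qed

lemma clipped_transform_measurable:
  assumes a: "rational_partition a n s t" and s: "0 \<le> s"
  shows "martingale_transform a (clipped_diff R a s) n \<in> borel_measurable M"
  using a s clipped_diff_adapted[OF a s]
  by (intro measurable_filtration_imp[OF martingale_transform_adapted]) (auto simp: rational_partition_def)

lemma clipped_transform_L2_le:
  assumes a: "rational_partition a n s t" and s: "0 \<le> s" "s \<in> \<rat>" and R: "0 \<le> R"
  shows "integrable M (\<lambda>\<omega>. (martingale_transform a (clipped_diff R a s) n \<omega>)\<^sup>2)"
    "expectation (\<lambda>\<omega>. (martingale_transform a (clipped_diff R a s) n \<omega>)\<^sup>2)
       \<le> expectation (\<lambda>\<omega>. (oscillation t R s \<omega>)\<^sup>2) * (t - s)"
proof -
  have a_props: "mono a" "a 0 = s" "a n = t" "\<forall>i<n. a i < a (Suc i)"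
    using a unfolding rational_partition_def by auto
  have "s \<le> t" using rational_partition_range[OF a, of n] by simp
  note osc_int = oscillation_square_integrable[OF R s(2,1) \<open>s \<le> t\<close>]
  have isometry:
    "integrable M (\<lambda>\<omega>. (martingale_transform a (clipped_diff R a s) n \<omega>)\<^sup>2) \<and>
     expectation (\<lambda>\<omega>. (martingale_transform a (clipped_diff R a s) n \<omega>)\<^sup>2) =
       (\<Sum>i<n. expectation (\<lambda>\<omega>. (clipped_diff R a s i \<omega>)\<^sup>2) * (a (Suc i) - a i))"
    using a_props s clipped_diff_adapted[OF a s(1)] clipped_diff_bounded[OF R]
    by (intro martingale_transform_isometry[where C="L * (2 * R)"]) auto
  then show "integrable M (\<lambda>\<omega>. (martingale_transform a (clipped_diff R a s) n \<omega>)\<^sup>2)" by simp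
  have "(\<Sum>i<n. expectation (\<lambda>\<omega>. (clipped_diff R a s i \<omega>)\<^sup>2) * (a (Suc i) - a i))
      \<le> (\<Sum>i<n. expectation (\<lambda>\<omega>. (oscillation t R s \<omega>)\<^sup>2) * (a (Suc i) - a i))"
  proof (intro sum_mono mult_right_mono)
    fix i assume "i \<in> {..<n}"
    then have i: "i < n" by simp
    show "0 \<le> a (Suc i) - a i" using a_props(4) i by (simp add: less_imp_le)
    have "integrable M (\<lambda>\<omega>. (clipped_diff R a s i \<omega>)\<^sup>2)"
    proof (rule integrable_const_bound[where B="(L * (2 * R))\<^sup>2"])
      show "AE \<omega> in M. norm ((clipped_diff R a s i \<omega>)\<^sup>2) \<le> (L * (2 * R))\<^sup>2"
        using clipped_diff_bounded[OF R] by (intro AE_I2) (simp add: abs_le_square_iff[symmetric] order_trans[OF _ abs_ge_self])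
      show "(\<lambda>\<omega>. (clipped_diff R a s i \<omega>)\<^sup>2) \<in> borel_measurable M"
        using measurable_filtration_imp[OF clipped_diff_adapted[OF a s(1)]] i by simp
    qed
    then show "expectation (\<lambda>\<omega>. (clipped_diff R a s i \<omega>)\<^sup>2) \<le> expectation (\<lambda>\<omega>. (oscillation t R s \<omega>)\<^sup>2)"
      using clipped_diff_le_oscillation[OF a R i]
      by (intro integral_mono[OF _ osc_int]) (simp_all add: abs_le_square_iff[symmetric] order_trans[OF _ abs_ge_self])
  qed
  also have "\<dots> = expectation (\<lambda>\<omega>. (oscillation t R s \<omega>)\<^sup>2) * (t - s)"
    by (simp add: sum_distrib_left[symmetric] sum_lessThan_telescope a_props(2,3))
  finally show "expectation (\<lambda>\<omega>. (martingale_transform a (clipped_diff R a s) n \<omega>)\<^sup>2)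
       \<le> expectation (\<lambda>\<omega>. (oscillation t R s \<omega>)\<^sup>2) * (t - s)"
    using isometry by simp
qed

lemma prob_clipped_transform_le:
  assumes a: "rational_partition a n s t" and s: "0 \<le> s" "s \<in> \<rat>" and R: "0 \<le> R" and \<eta>: "0 < \<eta>"
  shows "prob {\<omega>\<in>space M. \<eta> < \<bar>martingale_transform a (clipped_diff R a s) n \<omega>\<bar>}
           \<le> expectation (\<lambda>\<omega>. (oscillation t R s \<omega>)\<^sup>2) * (t - s) / \<eta>\<^sup>2"
proof -
  let ?E = "martingale_transform a (clipped_diff R a s) n"
  note L2 = clipped_transform_L2_le[OF a s R]
  have [measurable]: "?E \<in> borel_measurable M" using clipped_transform_measurable[OF a s(1)] .
  have "{\<omega>\<in>space M. \<eta> < \<bar>?E \<omega>\<bar>} \<subseteq> {\<omega>\<in>space M. \<eta>\<^sup>2 \<le> (?E \<omega>)\<^sup>2}"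
    using \<eta> by (auto simp: abs_le_square_iff[symmetric] intro: less_imp_le)
  then have "prob {\<omega>\<in>space M. \<eta> < \<bar>?E \<omega>\<bar>} \<le> prob {\<omega>\<in>space M. \<eta>\<^sup>2 \<le> (?E \<omega>)\<^sup>2}"
    by (intro finite_measure_mono) measurable
  also have "\<dots> \<le> expectation (\<lambda>\<omega>. (?E \<omega>)\<^sup>2) / \<eta>\<^sup>2"
    by (rule integral_Markov_inequality_measure[OF L2(1), where A="space M"]) (use \<eta> in auto)
  also have "\<dots> \<le> expectation (\<lambda>\<omega>. (oscillation t R s \<omega>)\<^sup>2) * (t - s) / \<eta>\<^sup>2"
    using L2(2) by (simp add: divide_right_mono)
  finally show ?thesis .
qed

text \<open>On bounded paths the clipping is inactive.\<close>

lemma riemann_sum_split: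
  assumes a: "rational_partition a n s t" and s: "0 \<le> s" and \<omega>: "\<omega> \<in> path_bounded t R"
  shows "(\<Sum>i<n. \<sigma> (X (a i) \<omega>) * (W (a (Suc i)) \<omega> - W (a i) \<omega>)) =
         \<sigma> (X s \<omega>) * (W t \<omega> - W s \<omega>) + martingale_transform a (clipped_diff R a s) n \<omega>"
proof -
  have a_props: "a 0 = s" "a n = t" using a unfolding rational_partition_def by auto
  have bounded: "\<bar>X (a i) \<omega>\<bar> \<le> R" if "i < n" for i
  proof -
    have "a i \<in> \<rat> \<inter> {0..t}"
      using a that s rational_partition_range[OF a, of i] unfolding rational_partition_def by auto
    then show ?thesis using \<omega> unfolding path_bounded_def by blast
  qed
  have "(\<Sum>i<n. \<sigma> (X s \<omega>) * (W (a (Suc i)) \<omega> - W (a i) \<omega>)) = \<sigma> (X s \<omega>) * (W t \<omega> - W s \<omega>)"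
    by (simp add: sum_distrib_left[symmetric] sum_lessThan_telescope[of "\<lambda>i. W (a i) \<omega>"] a_props)
  moreover have "\<sigma> (X (a i) \<omega>) = \<sigma> (X s \<omega>) + clipped_diff R a s i \<omega>" if "i < n" for i
    using bounded[OF that] bounded[of 0] that a_props(1) by (simp add: clipped_diff_def clip_id)
  ultimately show ?thesis
    unfolding martingale_transform_def by (simp add: distrib_right sum.distrib)
qed

text \<open>Outside small events, the Brownian increment over [s,t] is pinned down by the endpoint X t.\<close>

lemma increment_pinned:
  assumes m: "2 ^ m * s = real K" and s: "0 \<le> s" "s < t" "s \<in> \<rat>"
    and \<omega>: "\<omega> \<in> path_bounded t R"
    and c: "0 < c" "\<And>x. \<bar>x\<bar> \<le> R \<Longrightarrow> c \<le> \<sigma> x"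
    and close_t: "\<bar>riemann_sum m t \<omega> - diffusion_part t \<omega>\<bar> \<le> \<eta>"
    and close_s: "\<bar>riemann_sum m s \<omega> - diffusion_part s \<omega>\<bar> \<le> \<eta>"
    and small: "\<bar>martingale_transform (dyadic_grid m s t) (clipped_diff R (dyadic_grid m s t) s)
                   (nat \<lceil>2 ^ m * (t - s)\<rceil>) \<omega>\<bar> \<le> \<eta>"
  shows "\<bar>(W t \<omega> - W s \<omega>) - (X t \<omega> - X s \<omega>) / \<sigma> (X s \<omega>)\<bar> \<le> (\<beta> * (t - s) + 3 * \<eta>) / c"
proof -
  note a = rational_partition_dyadic_grid[OF s(3) less_imp_le[OF s(2)], of m]
  have \<omega>M: "\<omega> \<in> space M" using \<omega> unfolding path_bounded_def by simp
  have "s \<in> \<rat> \<inter> {0..t}" using s by simp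
  then have sigma_ge: "c \<le> \<sigma> (X s \<omega>)" using \<omega> c(2) unfolding path_bounded_def by blast
  have "riemann_sum m t \<omega> - riemann_sum m s \<omega> =
        \<sigma> (X s \<omega>) * (W t \<omega> - W s \<omega>) +
        martingale_transform (dyadic_grid m s t) (clipped_diff R (dyadic_grid m s t) s) (nat \<lceil>2 ^ m * (t - s)\<rceil>) \<omega>"
    unfolding riemann_sum_def ito_riemann_sum_diff[OF m s(2)] using riemann_sum_split[OF a s(1) \<omega>] .
  moreover have "\<bar>(LBINT u=0..t. b (X u \<omega>)) - (LBINT u=0..s. b (X u \<omega>))\<bar> \<le> \<beta> * (t - s)"
    using drift_integral_diff_le[where X=X and b=b and B=\<beta>,
        OF X_continuous[OF \<omega>M] b_measurable b_bounded s(1) less_imp_le[OF s(2)]] .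
  ultimately have "\<bar>\<sigma> (X s \<omega>) * (W t \<omega> - W s \<omega>) - (X t \<omega> - X s \<omega>)\<bar> \<le> \<beta> * (t - s) + 3 * \<eta>"
    using close_t close_s small unfolding diffusion_part_def by (simp add: abs_le_iff)
  moreover have "\<bar>(W t \<omega> - W s \<omega>) - (X t \<omega> - X s \<omega>) / \<sigma> (X s \<omega>)\<bar> =
      \<bar>\<sigma> (X s \<omega>) * (W t \<omega> - W s \<omega>) - (X t \<omega> - X s \<omega>)\<bar> / \<sigma> (X s \<omega>)"
    using sigma_ge c(1) by (simp add: field_simps abs_divide)
  ultimately have "\<bar>(W t \<omega> - W s \<omega>) - (X t \<omega> - X s \<omega>) / \<sigma> (X s \<omega>)\<bar> \<le> (\<beta> * (t - s) + 3 * \<eta>) / \<sigma> (X s \<omega>)"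
    using sigma_ge c(1) by (simp add: divide_right_mono)
  also have "\<dots> \<le> (\<beta> * (t - s) + 3 * \<eta>) / c"
    using sigma_ge c(1) beta_nonneg s(2) close_t by (intro divide_left_mono) auto
  finally show ?thesis .
qed

lemma prob_atom_le_level:
  assumes s: "0 \<le> s" "s < t" "s \<in> \<rat>" and K: "2 ^ m * s = real K" and R: "0 < R"
    and c: "0 < c" "\<And>x. \<bar>x\<bar> \<le> R \<Longrightarrow> c \<le> \<sigma> x" and \<eta>: "0 < \<eta>"
  shows "prob {\<omega>\<in>space M. X t \<omega> = x} \<le> prob (space M - path_bounded t R)
           + prob {\<omega>\<in>space M. \<eta> < \<bar>riemann_sum m t \<omega> - diffusion_part t \<omega>\<bar>}
           + prob {\<omega>\<in>space M. \<eta> < \<bar>riemann_sum m s \<omega> - diffusion_part s \<omega>\<bar>}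
           + expectation (\<lambda>\<omega>. (oscillation t R s \<omega>)\<^sup>2) * (t - s) / \<eta>\<^sup>2
           + 2 * ((\<beta> * (t - s) + 3 * \<eta>) / c) / sqrt (t - s)"
proof -
  note a = rational_partition_dyadic_grid[OF s(3) less_imp_le[OF s(2)], of m]
  define E where "E = martingale_transform (dyadic_grid m s t) (clipped_diff R (dyadic_grid m s t) s)
                        (nat \<lceil>2 ^ m * (t - s)\<rceil>)"
  define G where "G r = {\<omega>\<in>space M. \<eta> < \<bar>riemann_sum m r \<omega> - diffusion_part r \<omega>\<bar>}" for r
  define G3 where "G3 = {\<omega>\<in>space M. \<eta> < \<bar>E \<omega>\<bar>}"
  define r where "r = (\<beta> * (t - s) + 3 * \<eta>) / c"
  define V where "V \<omega> = (x - X s \<omega>) / \<sigma> (X s \<omega>)" for \<omega>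
  define N where "N = {\<omega>\<in>space M. \<bar>(W t \<omega> - W s \<omega>) - V \<omega>\<bar> \<le> r}"
  have V_adapted: "V \<in> borel_measurable (\<F> s)"
    using X_adapted[OF s(1)] unfolding V_def by measurable
  have "0 \<le> r" unfolding r_def using beta_nonneg s(2) \<eta> c(1) by simp
  then have prob_N: "prob N \<le> 2 * r / sqrt (t - s)"
    unfolding N_def by (rule prob_increment_close_le[OF s(1,2) V_adapted])
  have prob_G3: "prob G3 \<le> expectation (\<lambda>\<omega>. (oscillation t R s \<omega>)\<^sup>2) * (t - s) / \<eta>\<^sup>2"
    unfolding G3_def E_def using prob_clipped_transform_le[OF a s(1,3) less_imp_le[OF R] \<eta>] .
  have [measurable]: "riemann_sum m t \<in> borel_measurable M" "riemann_sum m s \<in> borel_measurable M"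
    "diffusion_part t \<in> borel_measurable M" "diffusion_part s \<in> borel_measurable M"
    "E \<in> borel_measurable M" "V \<in> borel_measurable M" "W t \<in> borel_measurable M" "W s \<in> borel_measurable M"
    using riemann_sum_measurable diffusion_part_measurable s(1,2) clipped_transform_measurable[OF a s(1)]
      measurable_filtration_imp[OF V_adapted] W_measurable unfolding E_def by auto
  have sets: "G t \<in> events" "G s \<in> events" "G3 \<in> events" "N \<in> events" "space M - path_bounded t R \<in> events"
    unfolding G_def G3_def N_def using path_bounded_sets by measurable
  have "{\<omega>\<in>space M. X t \<omega> = x} \<subseteq> (space M - path_bounded t R) \<union> G t \<union> G s \<union> G3 \<union> N"
  proof
    fix \<omega> assume "\<omega> \<in> {\<omega>\<in>space M. X t \<omega> = x}"
    moreover have "\<omega> \<in> N"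
      if "\<omega> \<in> path_bounded t R" "\<omega> \<notin> G t" "\<omega> \<notin> G s" "\<omega> \<notin> G3" "\<omega> \<in> space M" "X t \<omega> = x"
      using increment_pinned[OF K s that(1) c, of \<eta>] that
      unfolding G_def G3_def N_def V_def r_def E_def by (auto simp: not_less)
    ultimately show "\<omega> \<in> (space M - path_bounded t R) \<union> G t \<union> G s \<union> G3 \<union> N" by blast
  qed
  then have "prob {\<omega>\<in>space M. X t \<omega> = x} \<le> prob ((space M - path_bounded t R) \<union> G t \<union> G s \<union> G3 \<union> N)"
    using sets by (intro finite_measure_mono) auto
  also have "\<dots> \<le> prob (space M - path_bounded t R) + prob (G t) + prob (G s) + prob G3 + prob N"
    using sets by (intro order.trans[OF measure_Un_le] add_right_mono) auto
  finally show ?thesis using prob_G3 prob_N unfolding G_def r_def by simp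
qed

lemma prob_atom_le:
  assumes t: "0 < t" and s_def: "s = dyadic_below t q" and R: "0 < R"
    and c: "0 < c" "\<And>x. \<bar>x\<bar> \<le> R \<Longrightarrow> c \<le> \<sigma> x" and \<eta>: "0 < \<eta>"
  shows "prob {\<omega>\<in>space M. X t \<omega> = x} \<le> prob (space M - path_bounded t R)
           + expectation (\<lambda>\<omega>. (oscillation t R s \<omega>)\<^sup>2) * (t - s) / \<eta>\<^sup>2
           + 2 * ((\<beta> * (t - s) + 3 * \<eta>) / c) / sqrt (t - s)"
proof -
  have s: "0 \<le> s" "s < t" "s \<in> \<rat>" using dyadic_below_bounds[OF t] unfolding s_def by auto
  define G where "G r m = prob {\<omega>\<in>space M. \<eta> < \<bar>riemann_sum m r \<omega> - diffusion_part r \<omega>\<bar>}" for r m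
  define \<alpha> where "\<alpha> = prob (space M - path_bounded t R)
           + expectation (\<lambda>\<omega>. (oscillation t R s \<omega>)\<^sup>2) * (t - s) / \<eta>\<^sup>2
           + 2 * ((\<beta> * (t - s) + 3 * \<eta>) / c) / sqrt (t - s)"
  have level: "eventually (\<lambda>m. prob {\<omega>\<in>space M. X t \<omega> = x} \<le> \<alpha> + G t m + G s m) sequentially"
  proof (rule eventually_sequentiallyI)
    fix m assume "q \<le> m"
    have "2 ^ m * s = real (nat (\<lceil>2 ^ q * t\<rceil> - 1) * 2 ^ (m - q))"
      using dyadic_below_on_grid[OF \<open>q \<le> m\<close>] unfolding s_def .
    then have "prob {\<omega>\<in>space M. X t \<omega> = x} \<le> prob (space M - path_bounded t R)
           + G t m + G s m + expectation (\<lambda>\<omega>. (oscillation t R s \<omega>)\<^sup>2) * (t - s) / \<eta>\<^sup>2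
           + 2 * ((\<beta> * (t - s) + 3 * \<eta>) / c) / sqrt (t - s)"
      unfolding G_def by (rule prob_atom_le_level[OF s _ R c \<eta>])
    then show "prob {\<omega>\<in>space M. X t \<omega> = x} \<le> \<alpha> + G t m + G s m" unfolding \<alpha>_def by linarith
  qed
  have "(\<lambda>m. \<alpha> + G t m + G s m) \<longlonglongrightarrow> \<alpha> + 0 + 0"
    unfolding G_def using riemann_sum_converges[OF less_imp_le[OF t] \<eta>] riemann_sum_converges[OF s(1) \<eta>]
    by (intro tendsto_add tendsto_const)
  from tendsto_lowerbound[OF this level] have "prob {\<omega>\<in>space M. X t \<omega> = x} \<le> \<alpha> + 0 + 0"
    by simp
  then show ?thesis unfolding \<alpha>_def by simp
qed

lemma prob_atom_le_not_bounded:
  assumes t: "0 < t" and R: "0 < R" and \<epsilon>: "0 < \<epsilon>"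
  shows "prob {\<omega>\<in>space M. X t \<omega> = x} \<le> prob (space M - path_bounded t R) + \<epsilon>"
proof -
  obtain c where c: "0 < c" "\<And>x. \<bar>x\<bar> \<le> R \<Longrightarrow> c \<le> \<sigma> x"
    using sigma_bounded_below[OF R] by blast
  define \<kappa> where "\<kappa> = \<epsilon> * c / 18"
  have \<kappa>: "0 < \<kappa>" unfolding \<kappa>_def using \<epsilon> c by simp
  have ev_osc: "eventually (\<lambda>q. expectation (\<lambda>\<omega>. (oscillation t R (dyadic_below t q) \<omega>)\<^sup>2) < \<kappa>\<^sup>2 * (\<epsilon> / 3)) sequentially"
    using oscillation_L2_tendsto[OF t less_imp_le[OF R]] by (rule order_tendstoD) (use \<kappa> \<epsilon> in simp)
  have "(\<lambda>q. 2 * \<beta> * sqrt (t - dyadic_below t q) / c) \<longlonglongrightarrow> 2 * \<beta> * sqrt (t - t) / c"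
    by (intro tendsto_intros dyadic_below_tendsto[OF t]) (use c in simp)
  then have ev_drift: "eventually (\<lambda>q. 2 * \<beta> * sqrt (t - dyadic_below t q) / c < \<epsilon> / 3) sequentially"
    by (rule order_tendstoD) (use \<epsilon> in simp)
  obtain q
    where q: "expectation (\<lambda>\<omega>. (oscillation t R (dyadic_below t q) \<omega>)\<^sup>2) < \<kappa>\<^sup>2 * (\<epsilon> / 3)"
      "2 * \<beta> * sqrt (t - dyadic_below t q) / c < \<epsilon> / 3"
    using eventually_conj[OF ev_osc ev_drift] unfolding eventually_sequentially by blast
  define s where "s = dyadic_below t q"
  define h where "h = t - s"
  have h: "0 < h" unfolding h_def s_def using dyadic_below_bounds(1)[OF t] by simp
  have "prob {\<omega>\<in>space M. X t \<omega> = x} \<le> prob (space M - path_bounded t R)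
         + expectation (\<lambda>\<omega>. (oscillation t R s \<omega>)\<^sup>2) * h / (\<kappa> * sqrt h)\<^sup>2
         + 2 * ((\<beta> * h + 3 * (\<kappa> * sqrt h)) / c) / sqrt h"
    using \<kappa> h unfolding h_def by (intro prob_atom_le[OF t s_def R c] mult_pos_pos) simp_all
  also have "expectation (\<lambda>\<omega>. (oscillation t R s \<omega>)\<^sup>2) * h / (\<kappa> * sqrt h)\<^sup>2
      = expectation (\<lambda>\<omega>. (oscillation t R s \<omega>)\<^sup>2) / \<kappa>\<^sup>2"
    using h \<kappa> by (simp add: power_mult_distrib)
  also have "2 * ((\<beta> * h + 3 * (\<kappa> * sqrt h)) / c) / sqrt h = 2 * \<beta> * sqrt h / c + \<epsilon> / 3"
  proof -
    have "\<beta> * h = \<beta> * sqrt h * sqrt h" using h by (simp add: mult.assoc)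
    then show ?thesis unfolding \<kappa>_def using h c(1) by (simp add: field_simps)
  qed
  also have "expectation (\<lambda>\<omega>. (oscillation t R s \<omega>)\<^sup>2) / \<kappa>\<^sup>2 < \<epsilon> / 3"
    using q(1) \<kappa> unfolding s_def by (simp add: divide_less_eq mult.commute)
  finally show ?thesis using q(2) unfolding h_def s_def by simp
qed

theorem prob_X_eq_zero:
  assumes t: "0 < t"
  shows "prob {\<omega>\<in>space M. X t \<omega> = x} = 0"
proof -
  have "prob {\<omega>\<in>space M. X t \<omega> = x} \<le> 0 + \<epsilon>" if \<epsilon>: "0 < \<epsilon>" for \<epsilon>
  proof -
    have "eventually (\<lambda>k. prob (space M - path_bounded t (real k)) < \<epsilon> / 2) sequentially"
      using prob_not_path_bounded_tendsto[of t] by (rule order_tendstoD) (use \<epsilon> in simp)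
    then have "eventually (\<lambda>k. prob (space M - path_bounded t (real k)) < \<epsilon> / 2 \<and> 1 \<le> k) sequentially"
      by (intro eventually_conj eventually_ge_at_top)
    then obtain k where "prob (space M - path_bounded t (real k)) < \<epsilon> / 2" "1 \<le> k"
      unfolding eventually_sequentially by blast
    moreover from this(2) have "prob {\<omega>\<in>space M. X t \<omega> = x} \<le> prob (space M - path_bounded t (real k)) + \<epsilon> / 2"
      using \<epsilon> by (intro prob_atom_le_not_bounded[OF t]) simp_all
    ultimately show ?thesis by linarith
  qed
  then have "prob {\<omega>\<in>space M. X t \<omega> = x} \<le> 0"
    by (rule field_le_epsilon)
  then show ?thesis using measure_nonneg[of M] by (simp add: order_antisym)
qed

end

section \<open>Convergence of the discretised truth values\<close>

lemma (in prob_space) prob_models_Lambda_tendsto: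
  fixes X :: "real \<Rightarrow> 'a \<Rightarrow> real"
  assumes X: "\<And>s. 0 \<le> s \<Longrightarrow> random_variable borel (X s)" and atoms: "\<And>a. I a \<in> sets borel"
    and t: "0 \<le> t" and lim: "AE \<omega> in M. (\<lambda>n. chi_n I X n p \<omega> t) \<longlonglongrightarrow> chi I X p \<omega> t"
  shows "(\<lambda>n. prob {\<omega>\<in>space M. models I X \<omega> (Lambda n t) p}) \<longlonglongrightarrow> prob {\<omega>\<in>space M. models I X \<omega> t p}"
proof -
  define A where "A s = {\<omega>\<in>space M. models I X \<omega> s p}" for s
  have A_sets: "A s \<in> events" if "0 \<le> s" for s
    using measurable_sets[OF X[OF that] psem_borel[OF atoms]]
    unfolding A_def models_def by (simp add: vimage_def Int_def conj_commute)
  have chi_indicator: "chi_n I X n p \<omega> t = indicator (A (Lambda n t)) \<omega>" "chi I X p \<omega> t = indicator (A t) \<omega>"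
    if "\<omega> \<in> space M" for \<omega> n
    using that unfolding A_def chi_n_def chi_def by simp_all
  have "(\<lambda>n. prob (A (Lambda n t))) \<longlonglongrightarrow> prob (A t)"
  proof (rule prob_tendsto_of_AE_indicator)
    show "AE \<omega> in M. (\<lambda>n. indicator (A (Lambda n t)) \<omega> :: real) \<longlonglongrightarrow> indicator (A t) \<omega>"
      using lim by (rule AE_mp) (simp add: chi_indicator AE_I2)
  qed (use A_sets Lambda_nonneg t in auto)
  then show ?thesis unfolding A_def .
qed

lemma (in sde) AE_chi_n_tendsto:
  assumes t: "0 < t" and B: "\<forall>\<omega>\<in>space M. \<forall>s\<ge>0. models I X \<omega> s p \<longleftrightarrow> X s \<omega> \<in> B"
    and "sep_interval_union B"
  shows "AE \<omega> in M. (\<lambda>n. chi_n I X n p \<omega> t) \<longlonglongrightarrow> chi I X p \<omega> t"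
proof -
  have "AE \<omega> in M. X t \<omega> \<notin> frontier B"
    using assms by (intro AE_not_in_finite finite_frontier_sep_interval_union X_measurable prob_X_eq_zero) auto
  then show ?thesis
  proof (rule AE_mp, intro AE_I2 impI)
    fix \<omega> assume "\<omega> \<in> space M" "X t \<omega> \<notin> frontier B"
    then show "(\<lambda>n. chi_n I X n p \<omega> t) \<longlonglongrightarrow> chi I X p \<omega> t"
      using B X_continuous t by (intro chi_n_tendsto) auto
  qed
qed

theorem lemma6p22:
  fixes M :: "'w measure" and W X :: "real \<Rightarrow> 'w \<Rightarrow> real"
    and b \<sigma> :: "real \<Rightarrow> real" and \<xi> :: real
    and I :: "'a::finite \<Rightarrow> real set" and p :: "'a pform" and t :: real
  assumes BM: "brownian_motion M W"
    and sigma_nondeg: "\<And>K. compact K \<Longrightarrow> K \<noteq> {} \<Longrightarrow> Inf (\<sigma> ` K) > 0"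
    and sigma_lip: "\<exists>C. C-lipschitz_on UNIV \<sigma>"
    and b_meas: "b \<in> borel_measurable borel"
    and b_bdd: "bounded (range b)"
    and sol: "strong_solution M W b \<sigma> \<xi> X"
    and atoms_borel: "\<And>a. I a \<in> sets borel"
    and intervals: "\<And>q. \<exists>B. (\<forall>\<omega>\<in>space M. \<forall>s\<ge>0. models I X \<omega> s q \<longleftrightarrow> X s \<omega> \<in> B)
                          \<and> sep_interval_union B"
    and t_pos: "t > 0"
  shows "(AE \<omega> in M. (\<lambda>n. chi_n I X n p \<omega> t) \<longlonglongrightarrow> chi I X p \<omega> t)
         \<and> (\<lambda>n. measure M {\<omega> \<in> space M. models I X \<omega> (Lambda n t) p})
             \<longlonglongrightarrow> measure M {\<omega> \<in> space M. models I X \<omega> t p}"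
proof -
  obtain L where L: "L-lipschitz_on UNIV \<sigma>" using sigma_lip by blast
  obtain \<beta> where \<beta>: "\<And>x. \<bar>b x\<bar> \<le> \<beta>" using b_bdd unfolding bounded_iff by auto
  interpret sde M W b \<sigma> \<xi> X L \<beta>
    by unfold_locales (use BM sigma_nondeg L b_meas \<beta> sol in auto)
  obtain B where "\<forall>\<omega>\<in>space M. \<forall>s\<ge>0. models I X \<omega> s p \<longleftrightarrow> X s \<omega> \<in> B" "sep_interval_union B"
    using intervals by blast
  then have ae: "AE \<omega> in M. (\<lambda>n. chi_n I X n p \<omega> t) \<longlonglongrightarrow> chi I X p \<omega> t"
    by (rule AE_chi_n_tendsto[OF t_pos])
  moreover have "(\<lambda>n. measure M {\<omega> \<in> space M. models I X \<omega> (Lambda n t) p})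
      \<longlonglongrightarrow> measure M {\<omega> \<in> space M. models I X \<omega> t p}"
    using X_measurable atoms_borel t_pos ae by (intro prob_models_Lambda_tendsto) auto
  ultimately show ?thesis by simp
qed

end
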